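(* Let $b>1$ be a rational number and $d\in\{-163,-67,-43,-19,-11,-7,-3,-2,-1\}$. Let $U(b)=\{n\in\mathbb{N}:\sigma^*(n)=bn\}$ and $V_d(b)=\{z\in A(d): I_1^*(z)=b\}$, where $I_1^*$ is computed in $\mathcal O_{\mathbb{Q}(\sqrt{d})}$. Then there exists an injective function $g:U(b)\to V_d(b)$.
   Context: For a positive integer $n$, $\sigma^*(n)$ is the sum of the unitary divisors of $n$, i.e. of the positive divisors $c$ of $n$ with $\gcd(c,n/c)=1$. $\mathcal O_{\mathbb{Q}(\sqrt{d})}$ is $\mathbb{Z}[\frac{1+\sqrt d}{2}]$ if $d\equiv 1 \pmod 4$ and $\mathbb{Z}[\sqrt d]$ if $d\equiv 2,3\pmod 4$; for the listed $d$ it is a unique factorization domain. $|z|=\sqrt{z\bar z}$, $\arg(z)\in[0,2\pi)$. $A(d)$ is the set of nonzero $z\in\mathcal O_{\mathbb{Q}(\sqrt{d})}$ with $0\le\arg(z)<\pi/2$ if $d=-1$, with $0\le \arg(z)<\pi/3$ if $d=-3$, and with $0\le\arg(z)<\pi$ otherwise. Two elements are relatively prime if they have no nonunit common divisor. For nonzero $x,z$, write $x\Diamond z$ iff $x\in A(d)$, $x\mid z$, and $x$ is relatively prime to $z/x$. Define $\delta_1^*(z)=\sum_{x\Diamond z}|x|$ and $I_1^*(z)=\delta_1^*(z)/|z|$. *)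

theory Defs
  imports "HOL-Analysis.Analysis"
begin

definition sigma_star :: "nat \<Rightarrow> nat" where
  "sigma_star n = (\<Sum>c\<in>{c. c dvd n \<and> coprime c (n div c)}. c)"

text \<open>Generator of the ring of integers of Q(sqrt d), embedded in the complex numbers
  (for d < 0 we take sqrt d = i * sqrt |d|, i.e. the principal complex square root).\<close>
definition omega :: "int \<Rightarrow> complex" where
  "omega d = (if d mod 4 = 1 then (1 + csqrt (of_int d)) / 2 else csqrt (of_int d))"

definition Od :: "int \<Rightarrow> complex set" where
  "Od d = {of_int a + of_int b * omega d | a b. True}"

definition odvd :: "int \<Rightarrow> complex \<Rightarrow> complex \<Rightarrow> bool" where
  "odvd d x z \<longleftrightarrow> (\<exists>y\<in>Od d. z = x * y)"

definition ounit :: "int \<Rightarrow> complex \<Rightarrow> bool" where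
  "ounit d u \<longleftrightarrow> u \<in> Od d \<and> odvd d u 1"

definition orel_prime :: "int \<Rightarrow> complex \<Rightarrow> complex \<Rightarrow> bool" where
  "orel_prime d x y \<longleftrightarrow> (\<forall>c\<in>Od d. odvd d c x \<and> odvd d c y \<longrightarrow> ounit d c)"

definition arg0 :: "complex \<Rightarrow> real" where
  "arg0 z = (if Arg z < 0 then Arg z + 2 * pi else Arg z)"

definition Aset :: "int \<Rightarrow> complex set" where
  "Aset d = {z\<in>Od d. z \<noteq> 0 \<and> 0 \<le> arg0 z \<and>
     arg0 z < (if d = -1 then pi / 2 else if d = -3 then pi / 3 else pi)}"

definition diamond :: "int \<Rightarrow> complex \<Rightarrow> complex \<Rightarrow> bool" where
  "diamond d x z \<longleftrightarrow> x \<in> Aset d \<and> odvd d x z \<and> orel_prime d x (z / x)"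

definition delta1_star :: "int \<Rightarrow> complex \<Rightarrow> real" where
  "delta1_star d z = (\<Sum>x\<in>{x. diamond d x z}. cmod x)"

definition I1_star :: "int \<Rightarrow> complex \<Rightarrow> real" where
  "I1_star d z = delta1_star d z / cmod z"

definition U_set :: "rat \<Rightarrow> nat set" where
  "U_set b = {n. n > 0 \<and> of_nat (sigma_star n) = b * of_nat n}"

definition V_set :: "int \<Rightarrow> rat \<Rightarrow> complex set" where
  "V_set d b = {z\<in>Aset d. I1_star d z = of_rat b}"

end

(* Everything rests on unique factorisation in O for the nine listed d. It is verified as in
   Thue's treatment: if a prime p divides the norm of a without dividing a, an element of least
   norm in the ideal (a, p) has norm k p with k <= K for a small explicit bound K, and if k > 1,
   a prime factor of k (checked by computation to be inert or a norm) yields an element of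
   smaller norm in the ideal. Hence every rational prime p is either prime in O or the norm of
   a prime element pi_p.

   The lift of n = prod p^k is the associate in A(d) of the product of the pi_p^(2k) and of
   the inert p^k. It has absolute value n, and by unique factorisation its unitary divisors in
   A(d) are exactly the lifts of the unitary divisors of n. So delta_1^* of the lift of n is
   sigma^*(n), its I_1^* is sigma^*(n)/n, and n is recovered as the absolute value of its lift. *)

theory Submission
  imports Defs "HOL-Computational_Algebra.Primes"
begin

lemma bezout_prime_int:
  fixes b p :: int
  assumes "prime p" "\<not> p dvd b"
  shows "\<exists>u v. u * b + v * p = 1"
proof -
  have "gcd b p = 1"
    using assms by (metis coprime_commute coprime_iff_gcd_eq_1 prime_imp_coprime)
  then show ?thesis using bezout_int[of b p] by metis
qed

section \<open>The ring of integers\<close>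

definition trace_omega :: "int \<Rightarrow> int" where
  "trace_omega d = (if d mod 4 = 1 then 1 else 0)"

definition norm_omega :: "int \<Rightarrow> int" where
  "norm_omega d = (if d mod 4 = 1 then (1 - d) div 4 else - d)"

text \<open>The norm \<open>z z\<^sup>*\<close>, an integer on \<open>\<O>\<close>; the floor only serves to land in \<^typ>\<open>int\<close>.\<close>
definition inorm :: "complex \<Rightarrow> int" where
  "inorm z = \<lfloor>(cmod z)\<^sup>2\<rfloor>"

lemma omega_imaginary:
  assumes "d < 0"
  shows "omega d = (if d mod 4 = 1 then (1 + \<i> * of_real (sqrt (- of_int d))) / 2
                    else \<i> * of_real (sqrt (- of_int d)))"
proof -
  have "csqrt (of_int d) = \<i> * of_real (sqrt \<bar>Re (of_int d)\<bar>)"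
    using assms by (intro csqrt_of_real_nonpos) auto
  also have "\<bar>Re (of_int d)\<bar> = - of_int d" using assms by simp
  finally show ?thesis unfolding omega_def by simp
qed

lemma omega_add_cnj: "d < 0 \<Longrightarrow> omega d + cnj (omega d) = of_int (trace_omega d)"
  by (simp add: omega_imaginary trace_omega_def complex_eq_iff)

lemma omega_mult_cnj:
  assumes "d < 0"
  shows "omega d * cnj (omega d) = of_int (norm_omega d)"
proof (cases "d mod 4 = 1")
  case True
  then obtain k where k: "d = 4 * k + 1" by (metis mult.commute div_mult_mod_eq add.commute)
  then have "(1 - d) div 4 = -k" by simp
  then show ?thesis using True assms k
    by (simp add: omega_imaginary norm_omega_def complex_eq_iff field_simps)
next
  case False
  then show ?thesis using assms by (simp add: omega_imaginary norm_omega_def complex_eq_iff)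
qed

lemma omega_square:
  "d < 0 \<Longrightarrow> omega d * omega d = of_int (trace_omega d) * omega d - of_int (norm_omega d)"
proof -
  assume "d < 0"
  then have "cnj (omega d) = of_int (trace_omega d) - omega d"
    using omega_add_cnj[of d] by (simp add: algebra_simps eq_diff_eq)
  with omega_mult_cnj[OF \<open>d < 0\<close>] show ?thesis by (simp add: algebra_simps)
qed

locale imag_quadratic =
  fixes d :: int
  assumes d_neg: "d < 0"
begin

abbreviation "\<omega> \<equiv> omega d"
abbreviation "t\<^sub>\<omega> \<equiv> trace_omega d"
abbreviation "n\<^sub>\<omega> \<equiv> norm_omega d"
abbreviation "\<O> \<equiv> Od d"

lemma trace_omega_cases: "t\<^sub>\<omega> = 0 \<or> t\<^sub>\<omega> = 1"
  unfolding trace_omega_def by auto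

lemma norm_omega_pos: "n\<^sub>\<omega> \<ge> 1"
proof (cases "d mod 4 = 1")
  case True
  then obtain k where k: "d = 4 * k + 1" by (metis mult.commute div_mult_mod_eq add.commute)
  then have "(1 - d) div 4 = -k" by simp
  then show ?thesis using True d_neg k unfolding norm_omega_def by simp
qed (use d_neg in \<open>simp add: norm_omega_def\<close>)

lemma Od_iff: "z \<in> \<O> \<longleftrightarrow> (\<exists>a b. z = of_int a + of_int b * \<omega>)"
  unfolding Od_def by auto

lemma Od_of_int [simp]: "of_int k \<in> \<O>"
  unfolding Od_iff by (rule exI[of _ k], rule exI[of _ 0]) simp

lemma Od_0 [simp]: "0 \<in> \<O>" and Od_1 [simp]: "1 \<in> \<O>"
  using Od_of_int[of 0] Od_of_int[of 1] by simp_all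

lemma Od_omega [simp]: "\<omega> \<in> \<O>"
  unfolding Od_iff by (rule exI[of _ 0], rule exI[of _ 1]) simp

lemma Od_add [simp]: "x \<in> \<O> \<Longrightarrow> y \<in> \<O> \<Longrightarrow> x + y \<in> \<O>"
  unfolding Od_iff
  by (auto, rule_tac x="a+aa" in exI, rule_tac x="b+ba" in exI, simp add: algebra_simps)

lemma Od_uminus [simp]: "x \<in> \<O> \<Longrightarrow> - x \<in> \<O>"
  unfolding Od_iff
  by (auto, rule_tac x="-a" in exI, rule_tac x="-b" in exI, simp add: algebra_simps)

lemma Od_diff [simp]: "x \<in> \<O> \<Longrightarrow> y \<in> \<O> \<Longrightarrow> x - y \<in> \<O>"
  using Od_add[of x "-y"] by simp

lemma Od_mult [simp]:
  assumes "x \<in> \<O>" "y \<in> \<O>"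
  shows "x * y \<in> \<O>"
proof -
  obtain a b c e where xy: "x = of_int a + of_int b * \<omega>" "y = of_int c + of_int e * \<omega>"
    using assms unfolding Od_iff by blast
  have "x * y = of_int a * of_int c + (of_int a * of_int e + of_int b * of_int c) * \<omega>
      + of_int b * of_int e * (\<omega> * \<omega>)"
    unfolding xy by (simp add: algebra_simps)
  also have "\<dots> = of_int (a*c - n\<^sub>\<omega> * b * e) + of_int (a*e + b*c + t\<^sub>\<omega> * b * e) * \<omega>"
    unfolding omega_square[OF d_neg] by (simp add: algebra_simps)
  finally show ?thesis unfolding Od_iff by blast
qed

lemma Od_cnj [simp]:
  assumes "x \<in> \<O>"
  shows "cnj x \<in> \<O>"
proof -
  obtain a b where x: "x = of_int a + of_int b * \<omega>" using assms unfolding Od_iff by blast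
  have "cnj \<omega> = of_int t\<^sub>\<omega> - \<omega>" using omega_add_cnj[OF d_neg] by (simp add: algebra_simps eq_diff_eq)
  then have "cnj x = of_int a + of_int b * (of_int t\<^sub>\<omega> - \<omega>)" unfolding x by simp
  then have "cnj x = of_int (a + b * t\<^sub>\<omega>) + of_int (-b) * \<omega>" by (simp add: algebra_simps)
  then show ?thesis unfolding Od_iff by blast
qed

lemma Od_power [simp]: "x \<in> \<O> \<Longrightarrow> x ^ k \<in> \<O>"
  by (induction k) auto

lemma Od_prod [simp]: "(\<And>i. i \<in> S \<Longrightarrow> f i \<in> \<O>) \<Longrightarrow> prod f S \<in> \<O>"
  by (induction S rule: infinite_finite_induct) auto

lemma Im_omega_pos: "Im \<omega> > 0"
  using d_neg by (simp add: omega_imaginary)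

lemma Od_coords_unique:
  "of_int a + of_int b * \<omega> = of_int a' + of_int b' * \<omega> \<Longrightarrow> a = a' \<and> b = b'"
proof -
  assume h: "of_int a + of_int b * \<omega> = of_int a' + of_int b' * \<omega>"
  then have "Im (of_int a + of_int b * \<omega>) = Im (of_int a' + of_int b' * \<omega>)" by simp
  then have "of_int b * Im \<omega> = of_int b' * Im \<omega>" by simp
  then have "b = b'" using Im_omega_pos by simp
  with h show ?thesis by simp
qed

lemma Od_real_imp_int:
  assumes "y \<in> \<O>" "Im y = 0"
  shows "\<exists>k. y = of_int k"
proof -
  obtain a b where y: "y = of_int a + of_int b * \<omega>" using assms(1) unfolding Od_iff by blast
  with assms(2) Im_omega_pos have "b = 0" by simp
  then show ?thesis using y by auto
qed

lemma mult_cnj_coords: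
  "(of_int a + of_int b * \<omega>) * cnj (of_int a + of_int b * \<omega>) = of_int (a\<^sup>2 + t\<^sub>\<omega> * a * b + n\<^sub>\<omega> * b\<^sup>2)"
proof -
  have "(of_int a + of_int b * \<omega>) * cnj (of_int a + of_int b * \<omega>)
      = of_int a * of_int a + of_int a * of_int b * (\<omega> + cnj \<omega>) + of_int b * of_int b * (\<omega> * cnj \<omega>)"
    by (simp add: algebra_simps)
  also have "\<dots> = of_int (a\<^sup>2 + t\<^sub>\<omega> * a * b + n\<^sub>\<omega> * b\<^sup>2)"
    by (simp add: omega_add_cnj[OF d_neg] omega_mult_cnj[OF d_neg] power2_eq_square)
  finally show ?thesis .
qed

lemma mult_cnj_eq_inorm:
  assumes "x \<in> \<O>"
  shows "x * cnj x = of_int (inorm x)"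
proof -
  obtain k where k: "x * cnj x = of_int k"
    using assms mult_cnj_coords unfolding Od_iff by blast
  have "(cmod x)\<^sup>2 = Re (x * cnj x)" by (simp add: complex_mult_cnj cmod_power2)
  then have "inorm x = k" using k unfolding inorm_def by simp
  then show ?thesis using k by simp
qed

lemma inorm_eq_cmod_sq: "x \<in> \<O> \<Longrightarrow> of_int (inorm x) = (cmod x)\<^sup>2"
proof -
  assume "x \<in> \<O>"
  have "(cmod x)\<^sup>2 = Re (x * cnj x)" by (simp add: complex_mult_cnj cmod_power2)
  then show ?thesis using mult_cnj_eq_inorm[OF \<open>x \<in> \<O>\<close>] by simp
qed

lemma inorm_coords: "inorm (of_int a + of_int b * \<omega>) = a\<^sup>2 + t\<^sub>\<omega> * a * b + n\<^sub>\<omega> * b\<^sup>2"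
  using mult_cnj_eq_inorm[of "of_int a + of_int b * \<omega>"] mult_cnj_coords[of a b]
  unfolding Od_iff by (metis of_int_eq_iff)

lemma inorm_nonneg: "x \<in> \<O> \<Longrightarrow> inorm x \<ge> 0"
  using inorm_eq_cmod_sq[of x] by (metis of_int_0_le_iff zero_le_power2)

lemma inorm_eq_0_iff: "x \<in> \<O> \<Longrightarrow> inorm x = 0 \<longleftrightarrow> x = 0"
  using inorm_eq_cmod_sq[of x] by (metis norm_eq_zero of_int_eq_0_iff zero_eq_power2)

lemma inorm_mult: "x \<in> \<O> \<Longrightarrow> y \<in> \<O> \<Longrightarrow> inorm (x * y) = inorm x * inorm y"
  using inorm_eq_cmod_sq[of x] inorm_eq_cmod_sq[of y] inorm_eq_cmod_sq[of "x * y"]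
  by (metis Od_mult norm_mult of_int_eq_iff of_int_mult power_mult_distrib)

lemma inorm_of_int [simp]: "inorm (of_int k) = k\<^sup>2"
  unfolding inorm_def by simp (metis floor_of_int of_int_power)

lemma inorm_0 [simp]: "inorm 0 = 0" and inorm_1 [simp]: "inorm 1 = 1"
  using inorm_of_int[of 0] inorm_of_int[of 1] by simp_all

lemma inorm_cnj [simp]: "inorm (cnj x) = inorm x"
  unfolding inorm_def by simp

abbreviation odvd_infix (infix "\<preceq>" 50) where "x \<preceq> y \<equiv> odvd d x y"

lemma odvd_trans [trans]: "x \<preceq> y \<Longrightarrow> y \<preceq> z \<Longrightarrow> x \<preceq> z"
  unfolding odvd_def by (auto simp: mult.assoc)

lemma odvd_mult_right: "x \<preceq> y \<Longrightarrow> c \<in> \<O> \<Longrightarrow> x \<preceq> y * c"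
  unfolding odvd_def by (auto simp: mult.assoc)

lemma odvd_mult_left: "x \<preceq> y \<Longrightarrow> c \<in> \<O> \<Longrightarrow> x \<preceq> c * y"
  by (metis odvd_mult_right mult.commute)

lemma odvd_triv_left: "x \<in> \<O> \<Longrightarrow> c \<in> \<O> \<Longrightarrow> x \<preceq> x * c"
  unfolding odvd_def by auto

lemma odvd_triv_right: "x \<in> \<O> \<Longrightarrow> c \<in> \<O> \<Longrightarrow> x \<preceq> c * x"
  unfolding odvd_def by (auto simp: mult.commute)

lemma odvd_add: "x \<preceq> y \<Longrightarrow> x \<preceq> z \<Longrightarrow> x \<preceq> y + z"
  unfolding odvd_def by (metis Od_add distrib_left)

lemma odvd_diff: "x \<preceq> y \<Longrightarrow> x \<preceq> z \<Longrightarrow> x \<preceq> y - z"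
  unfolding odvd_def by (metis Od_diff right_diff_distrib)

lemma odvd_0 [simp]: "x \<preceq> 0"
  unfolding odvd_def by (rule bexI[of _ 0]) auto

lemma odvd_mult_cancel: "a * x \<preceq> a * y \<Longrightarrow> a \<noteq> 0 \<Longrightarrow> x \<preceq> y"
  unfolding odvd_def by (auto simp: mult.assoc)

lemma odvd_imp_inorm_dvd: "x \<in> \<O> \<Longrightarrow> x \<preceq> y \<Longrightarrow> inorm x dvd inorm y"
  unfolding odvd_def by (auto simp: inorm_mult)

lemma odvd_cnj: "x \<preceq> y \<Longrightarrow> cnj x \<preceq> cnj y"
  unfolding odvd_def by (auto intro!: bexI[of _ "cnj _"])

lemma odvd_cnj_self: "x \<in> \<O> \<Longrightarrow> x \<preceq> of_int (inorm x)"
  unfolding odvd_def using mult_cnj_eq_inorm by (auto intro!: bexI[of _ "cnj x"])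

lemma odvdE:
  assumes "x \<preceq> y" "x \<noteq> 0"
  shows "y / x \<in> \<O>" "y = x * (y / x)"
  using assms unfolding odvd_def by auto

lemma of_int_odvd_of_int_iff: "(of_int p :: complex) \<preceq> of_int m \<longleftrightarrow> p dvd m"
proof
  assume "(of_int p :: complex) \<preceq> of_int m"
  then obtain y where y: "y \<in> \<O>" "of_int m = of_int p * y" unfolding odvd_def by auto
  show "p dvd m"
  proof (cases "p = 0")
    case False
    then have "y = of_int m / of_int p" using y by (simp add: field_simps)
    then have "Im y = 0" by (simp add: Im_divide)
    then obtain k where "y = of_int k" using Od_real_imp_int y by blast
    then have "m = p * k" using y by (metis of_int_eq_iff of_int_mult)
    then show ?thesis by simp
  qed (use y in simp)
next
  assume "p dvd m"
  then show "(of_int p :: complex) \<preceq> of_int m"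
    unfolding odvd_def by (auto intro!: bexI[of _ "of_int (m div p)"])
qed

lemma ounit_iff_inorm: "ounit d u \<longleftrightarrow> u \<in> \<O> \<and> inorm u = 1"
proof
  assume "ounit d u"
  then obtain y where y: "u \<in> \<O>" "y \<in> \<O>" "1 = u * y" unfolding ounit_def odvd_def by auto
  then have "inorm u * inorm y = 1" using inorm_mult[of u y] by simp
  then show "u \<in> \<O> \<and> inorm u = 1"
    using y inorm_nonneg[of u] pos_zmult_eq_1_iff_lemma by fastforce
next
  assume "u \<in> \<O> \<and> inorm u = 1"
  then show "ounit d u"
    unfolding ounit_def odvd_def using mult_cnj_eq_inorm[of u] by (auto intro!: bexI[of _ "cnj u"])
qed

lemma ounit_mult_cnj: "ounit d u \<Longrightarrow> u * cnj u = 1"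
  using mult_cnj_eq_inorm unfolding ounit_iff_inorm by auto

lemma ounit_inverse: "ounit d u \<Longrightarrow> inverse u = cnj u"
  using ounit_mult_cnj by (metis inverse_unique)

lemma ounit_cnj: "ounit d u \<Longrightarrow> ounit d (cnj u)"
  unfolding ounit_iff_inorm by simp

lemma ounit_mult: "ounit d u \<Longrightarrow> ounit d v \<Longrightarrow> ounit d (u * v)"
  unfolding ounit_iff_inorm by (auto simp: inorm_mult)

lemma ounit_cmod: "ounit d u \<Longrightarrow> cmod u = 1"
  using inorm_eq_cmod_sq[of u] norm_ge_zero[of u] unfolding ounit_iff_inorm
  by (auto simp: power2_eq_1_iff)

lemma ounit_of_coords: "a\<^sup>2 + t\<^sub>\<omega> * a * b + n\<^sub>\<omega> * b\<^sup>2 = 1 \<Longrightarrow> ounit d (of_int a + of_int b * \<omega>)"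
  unfolding ounit_iff_inorm using inorm_coords by simp

lemma ounit_coords:
  "ounit d u \<Longrightarrow> \<exists>a b. u = of_int a + of_int b * \<omega> \<and> a\<^sup>2 + t\<^sub>\<omega> * a * b + n\<^sub>\<omega> * b\<^sup>2 = 1"
  unfolding ounit_iff_inorm Od_iff using inorm_coords by metis

section \<open>Prime elements\<close>

definition oprime :: "complex \<Rightarrow> bool" where
  "oprime x \<longleftrightarrow> x \<in> \<O> \<and> x \<noteq> 0 \<and> \<not> ounit d x \<and>
     (\<forall>a\<in>\<O>. \<forall>b\<in>\<O>. x \<preceq> a * b \<longrightarrow> x \<preceq> a \<or> x \<preceq> b)"

lemma prime_dvd_coords:
  assumes "prime p" "p dvd a\<^sup>2 + t\<^sub>\<omega> * a * b + n\<^sub>\<omega> * b\<^sup>2" "p dvd b"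
  shows "(of_int p :: complex) \<preceq> of_int a + of_int b * \<omega>"
proof -
  obtain b' where b': "b = p * b'" using assms(3) by auto
  have "p dvd t\<^sub>\<omega> * a * b + n\<^sub>\<omega> * b\<^sup>2" using b' by (intro dvd_add) (auto simp: power2_eq_square)
  then have "p dvd a\<^sup>2" using assms(2) by (metis add.assoc dvd_add_left_iff)
  then obtain a' where a': "a = p * a'" using assms(1) prime_dvd_power_int by (blast elim: dvdE)
  have "of_int a + of_int b * \<omega> = of_int p * (of_int a' + of_int b' * \<omega>)"
    using a' b' by (simp add: algebra_simps)
  moreover have "of_int a' + of_int b' * \<omega> \<in> \<O>" by simp
  ultimately show ?thesis unfolding odvd_def by blast
qed

lemma inorm_prime_coord_not_dvd:
  assumes "prime p" "inorm (of_int a + of_int b * \<omega>) = p"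
  shows "\<not> p dvd b"
proof
  assume "p dvd b"
  then have "(of_int p :: complex) \<preceq> of_int a + of_int b * \<omega>"
    using assms by (intro prime_dvd_coords) (auto simp: inorm_coords)
  from odvd_imp_inorm_dvd[OF Od_of_int this] have "p\<^sup>2 dvd p"
    using assms(2) by simp
  then show False
    using assms(1) prime_gt_1_int[of p] by (auto dest: zdvd_imp_le simp: power2_eq_square)
qed

lemma inorm_prime_odvd_of_int_iff:
  assumes "r \<in> \<O>" "inorm r = p" "prime p"
  shows "r \<preceq> of_int m \<longleftrightarrow> p dvd m"
proof
  assume "r \<preceq> of_int m"
  then have "p dvd m\<^sup>2" using odvd_imp_inorm_dvd[OF assms(1)] assms(2) by fastforce
  then show "p dvd m" using assms(3) prime_dvd_power_int by blast
next
  assume "p dvd m"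
  then show "r \<preceq> of_int m"
    using odvd_trans[OF odvd_cnj_self[OF assms(1)]] assms(2) of_int_odvd_of_int_iff by blast
qed

text \<open>For \<open>r = a + b \<omega>\<close> take \<open>c = b\<close>: \<open>b (x + y \<omega>) = (b x - y a) + y r\<close>.\<close>
lemma inorm_prime_residue_int:
  assumes "r \<in> \<O>" "inorm r = p" "prime p"
  obtains c where "\<not> p dvd c" "\<And>\<alpha>. \<alpha> \<in> \<O> \<Longrightarrow> \<exists>m. r \<preceq> of_int c * \<alpha> - of_int m"
proof -
  obtain a b where r: "r = of_int a + of_int b * \<omega>" using assms(1) unfolding Od_iff by blast
  have "\<exists>m. r \<preceq> of_int b * \<alpha> - of_int m" if "\<alpha> \<in> \<O>" for \<alpha>
  proof -
    obtain x y where \<alpha>: "\<alpha> = of_int x + of_int y * \<omega>" using \<open>\<alpha> \<in> \<O>\<close> unfolding Od_iff by blast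
    have "of_int b * \<alpha> - of_int (b * x - y * a) = of_int y * r"
      unfolding \<alpha> r by (simp add: algebra_simps)
    then show ?thesis using odvd_triv_right[OF assms(1)] by (metis Od_of_int)
  qed
  moreover have "\<not> p dvd b" using inorm_prime_coord_not_dvd assms r by blast
  ultimately show ?thesis using that by blast
qed

lemma inorm_prime_odvd_cancel_int:
  assumes "r \<in> \<O>" "inorm r = p" "prime p" "\<not> p dvd c" "\<alpha> \<in> \<O>" "r \<preceq> of_int c * \<alpha>"
  shows "r \<preceq> \<alpha>"
proof -
  obtain u v where uv: "u * c + v * p = 1" using bezout_prime_int assms(3,4) by blast
  have "(of_int u * of_int c + of_int v * of_int p :: complex) = 1"
    using uv by (metis of_int_1 of_int_add of_int_mult)
  then have "\<alpha> = (of_int u * of_int c + of_int v * of_int p) * \<alpha>" by simp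
  then have "\<alpha> = of_int u * (of_int c * \<alpha>) + (of_int v * \<alpha>) * of_int p"
    by (simp add: algebra_simps)
  moreover have "r \<preceq> (of_int v * \<alpha>) * of_int p"
    using assms inorm_prime_odvd_of_int_iff[of r p p] odvd_mult_left by simp
  moreover have "r \<preceq> of_int u * (of_int c * \<alpha>)"
    using assms(6) odvd_mult_left by simp
  ultimately show ?thesis using odvd_add by metis
qed

lemma inorm_prime_imp_oprime:
  assumes r: "r \<in> \<O>" "inorm r = p" and p: "prime p"
  shows "oprime r"
proof -
  obtain c where c: "\<not> p dvd c" "\<And>\<alpha>. \<alpha> \<in> \<O> \<Longrightarrow> \<exists>m. r \<preceq> of_int c * \<alpha> - of_int m"
    using inorm_prime_residue_int[OF r p] by blast
  have "r \<preceq> \<alpha> \<or> r \<preceq> \<beta>" if ab: "\<alpha> \<in> \<O>" "\<beta> \<in> \<O>" "r \<preceq> \<alpha> * \<beta>" for \<alpha> \<beta>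
  proof -
    obtain m1 m2 where m: "r \<preceq> of_int c * \<alpha> - of_int m1" "r \<preceq> of_int c * \<beta> - of_int m2"
      using c(2) ab by blast
    have "of_int (m1 * m2) = of_int (c * c) * (\<alpha> * \<beta>)
        - ((of_int c * \<alpha> - of_int m1) * (of_int c * \<beta>) + of_int m1 * (of_int c * \<beta> - of_int m2))"
      by (simp add: algebra_simps)
    also have "r \<preceq> \<dots>"
    proof (intro odvd_diff odvd_add)
      show "r \<preceq> of_int (c * c) * (\<alpha> * \<beta>)" using ab(3) by (simp add: odvd_mult_left)
      show "r \<preceq> (of_int c * \<alpha> - of_int m1) * (of_int c * \<beta>)" using m(1) ab by (simp add: odvd_mult_right)
      show "r \<preceq> of_int m1 * (of_int c * \<beta> - of_int m2)" using m(2) by (simp add: odvd_mult_left)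
    qed
    finally have "p dvd m1 \<or> p dvd m2"
      using inorm_prime_odvd_of_int_iff[OF r p] p prime_dvd_mult_int by blast
    then have "r \<preceq> of_int c * \<alpha> \<or> r \<preceq> of_int c * \<beta>"
      using m inorm_prime_odvd_of_int_iff[OF r p] by (metis diff_add_cancel odvd_add)
    then show ?thesis using inorm_prime_odvd_cancel_int[OF r p c(1)] ab by blast
  qed
  moreover have "r \<noteq> 0" "\<not> ounit d r"
    using r p inorm_eq_0_iff[of r] prime_gt_1_int[of p] ounit_iff_inorm by auto
  ultimately show ?thesis unfolding oprime_def using r by blast
qed

end

section \<open>Thue's lemma\<close>

lemma pigeonhole_linear_form:
  fixes a b p :: int and A B :: nat
  assumes "0 < p" "p < int ((A + 1) * (B + 1))"
  obtains x y where "(x, y) \<noteq> (0, 0)" "\<bar>x\<bar> \<le> int A" "\<bar>y\<bar> \<le> int B" "p dvd b * x - a * y"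
proof -
  define S where "S = {0..A} \<times> {0..B}"
  define F where "F = (\<lambda>(x::nat, y::nat). (b * int x - a * int y) mod p)"
  have "\<not> inj_on F S"
  proof
    assume "inj_on F S"
    moreover have "F ` S \<subseteq> {0..<p}" unfolding F_def using assms(1) by auto
    ultimately have "card S \<le> card {0..<p}" by (intro card_inj_on_le) auto
    then have "(A + 1) * (B + 1) \<le> nat p" unfolding S_def by (simp add: card_cartesian_product)
    then show False using assms by linarith
  qed
  then obtain x1 y1 x2 y2 where s: "(x1, y1) \<in> S" "(x2, y2) \<in> S" "(x1, y1) \<noteq> (x2, y2)"
      "F (x1, y1) = F (x2, y2)"
    unfolding inj_on_def by auto
  then have "p dvd (b * int x1 - a * int y1) - (b * int x2 - a * int y2)"
    unfolding F_def by (simp add: mod_eq_dvd_iff)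
  then have "p dvd b * (int x1 - int x2) - a * (int y1 - int y2)"
    by (simp add: algebra_simps)
  moreover have "\<bar>int x1 - int x2\<bar> \<le> int A" "\<bar>int y1 - int y2\<bar> \<le> int B"
    using s unfolding S_def by auto
  moreover have "(int x1 - int x2, int y1 - int y2) \<noteq> (0, 0)" using s(3) by auto
  ultimately show ?thesis using that by blast
qed

text \<open>The box \<open>[0, A] \<times> [0, B]\<close> with \<open>A \<approx> n\<^bsup>1/4\<^esup> \<surd>p\<close> and \<open>B \<approx> n\<^bsup>-1/4\<^esup> \<surd>p\<close>
  has more than \<open>p\<close> points while the quadratic form stays below \<open>(2 \<surd>n + t) p\<close> on it.\<close>
lemma box_for_quadratic_form:
  fixes n t p :: real
  assumes n: "n \<ge> 1" and t: "t \<ge> 0" and p: "p > 0"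
  obtains A B :: nat where "p < (real A + 1) * (real B + 1)"
    "real A ^ 2 + t * real A * real B + n * real B ^ 2 \<le> (2 * sqrt n + t) * p"
proof -
  define l where "l = sqrt (sqrt n)"
  define s where "s = sqrt p"
  have l: "l > 0" "l\<^sup>2 = sqrt n" using n unfolding l_def by auto
  have s: "s > 0" "s\<^sup>2 = p" using p unfolding s_def by auto
  define A where "A = nat \<lfloor>l * s\<rfloor>"
  define B where "B = nat \<lfloor>s / l\<rfloor>"
  have "real A = of_int \<lfloor>l * s\<rfloor>" "real B = of_int \<lfloor>s / l\<rfloor>"
    unfolding A_def B_def using l s by simp_all
  then have A: "real A \<le> l * s" "l * s < real A + 1" and B: "real B \<le> s / l" "s / l < real B + 1"
    using floor_correct[of "l * s"] floor_correct[of "s / l"] by linarith+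
  have "p = (l * s) * (s / l)" using l s by (simp add: power2_eq_square)
  also have "\<dots> < (real A + 1) * (real B + 1)" using A B l s by (intro mult_strict_mono) auto
  finally have "p < (real A + 1) * (real B + 1)" .
  moreover have "real A ^ 2 + t * real A * real B + n * real B ^ 2 \<le> (2 * sqrt n + t) * p"
  proof -
    have "real A ^ 2 \<le> (l * s)\<^sup>2" using A by (simp add: power_mono)
    also have "\<dots> = sqrt n * p" using l s by (simp add: power_mult_distrib)
    finally have A2: "real A ^ 2 \<le> sqrt n * p" .
    have "l * real B \<le> s" using B l by (simp add: field_simps)
    then have "(l * real B)\<^sup>2 \<le> s\<^sup>2" using l by (simp add: power_mono)
    then have "sqrt n * real B ^ 2 \<le> p" using l s by (simp add: power_mult_distrib)
    then have "sqrt n * (sqrt n * real B ^ 2) \<le> sqrt n * p" using n by (intro mult_left_mono) auto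
    then have B2: "n * real B ^ 2 \<le> sqrt n * p" using n by (simp add: mult.assoc[symmetric])
    have "real A * real B \<le> (l * s) * (s / l)" using A B by (intro mult_mono) auto
    also have "\<dots> = p" using l s by (simp add: power2_eq_square)
    finally have "t * (real A * real B) \<le> t * p" using t by (simp add: mult_left_mono)
    then show ?thesis using A2 B2 by (simp add: algebra_simps)
  qed
  ultimately show ?thesis using that by blast
qed

context imag_quadratic
begin

lemma inorm_coords_le:
  fixes A B :: nat
  assumes "\<bar>x\<bar> \<le> A" "\<bar>y\<bar> \<le> B"
  shows "inorm (of_int x + of_int y * \<omega>) \<le> (int A)\<^sup>2 + t\<^sub>\<omega> * int A * int B + n\<^sub>\<omega> * (int B)\<^sup>2"
proof -
  have "x\<^sup>2 \<le> (int A)\<^sup>2" "y\<^sup>2 \<le> (int B)\<^sup>2"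
    using assms abs_le_square_iff[of x "int A"] abs_le_square_iff[of y "int B"] by simp_all
  moreover have "t\<^sub>\<omega> * x * y \<le> t\<^sub>\<omega> * A * B"
  proof -
    have "\<bar>x * y\<bar> \<le> int A * int B" using assms by (simp add: abs_mult mult_mono)
    then have "x * y \<le> int A * int B" by linarith
    then show ?thesis using trace_omega_cases by auto
  qed
  moreover have "n\<^sub>\<omega> * y\<^sup>2 \<le> n\<^sub>\<omega> * (int B)\<^sup>2"
    using \<open>y\<^sup>2 \<le> (int B)\<^sup>2\<close> norm_omega_pos by (simp add: mult_left_mono)
  ultimately show ?thesis unfolding inorm_coords by linarith
qed

definition ideal_gen :: "complex \<Rightarrow> int \<Rightarrow> complex set" where
  "ideal_gen a p = {s * a + r * of_int p | s r. s \<in> \<O> \<and> r \<in> \<O>}"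

lemma ideal_gen_subset: "a \<in> \<O> \<Longrightarrow> x \<in> ideal_gen a p \<Longrightarrow> x \<in> \<O>"
  unfolding ideal_gen_def by auto

lemma ideal_gen_mult:
  assumes "x \<in> ideal_gen a p" "c \<in> \<O>"
  shows "c * x \<in> ideal_gen a p"
proof -
  obtain s r where "s \<in> \<O>" "r \<in> \<O>" "x = s * a + r * of_int p"
    using assms(1) unfolding ideal_gen_def by blast
  then have "c * x = (c * s) * a + (c * r) * of_int p" "c * s \<in> \<O>" "c * r \<in> \<O>"
    using assms(2) by (simp_all add: algebra_simps)
  then show ?thesis unfolding ideal_gen_def by blast
qed

lemma ideal_gen_add:
  assumes "x \<in> ideal_gen a p" "y \<in> ideal_gen a p"
  shows "x + y \<in> ideal_gen a p"
proof -
  obtain s r s' r' where "s \<in> \<O>" "r \<in> \<O>" "x = s * a + r * of_int p"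
    "s' \<in> \<O>" "r' \<in> \<O>" "y = s' * a + r' * of_int p"
    using assms unfolding ideal_gen_def by blast
  then have "x + y = (s + s') * a + (r + r') * of_int p" "s + s' \<in> \<O>" "r + r' \<in> \<O>"
    by (simp_all add: algebra_simps)
  then show ?thesis unfolding ideal_gen_def by blast
qed

lemma ideal_gen_generator: "a \<in> ideal_gen a p"
proof -
  have "a = 1 * a + 0 * of_int p" by simp
  then show ?thesis unfolding ideal_gen_def using Od_0 Od_1 by blast
qed

lemma ideal_gen_of_int_mult: "c \<in> \<O> \<Longrightarrow> of_int p * c \<in> ideal_gen a p"
proof -
  assume "c \<in> \<O>"
  moreover have "of_int p * c = 0 * a + c * of_int p" by simp
  ultimately show ?thesis unfolding ideal_gen_def using Od_0 by blast
qed

lemma ideal_gen_dvd_inorm: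
  assumes a: "a \<in> \<O>" "p dvd inorm a" and x: "x \<in> ideal_gen a p"
  shows "p dvd inorm x"
proof -
  obtain s r where sr: "s \<in> \<O>" "r \<in> \<O>" "x = s * a + r * of_int p"
    using x unfolding ideal_gen_def by auto
  define y where "y = s * a * cnj r"
  have "y \<in> \<O>" unfolding y_def using sr a by auto
  then obtain k where k: "y + cnj y = of_int k" using Od_real_imp_int[of "y + cnj y"] by auto
  have "x \<in> \<O>" using sr a by simp
  then have "(of_int (inorm x) :: complex) = x * cnj x"
    using mult_cnj_eq_inorm by simp
  also have "\<dots> = (s * cnj s) * (a * cnj a) + of_int p * (y + cnj y) + of_int p * of_int p * (r * cnj r)"
    unfolding sr y_def by (simp add: algebra_simps)
  also have "\<dots> = of_int (inorm s * inorm a + p * k + p * p * inorm r)"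
    using mult_cnj_eq_inorm sr a k by simp
  finally have "inorm x = inorm s * inorm a + p * k + p * p * inorm r"
    using of_int_eq_iff by blast
  then show ?thesis using a(2) by simp
qed

lemma ideal_gen_coprime_cancel:
  assumes "coprime c p" "x \<in> \<O>" "of_int c * x \<in> ideal_gen a p"
  shows "x \<in> ideal_gen a p"
proof -
  obtain u v where "u * c + v * p = 1"
    using assms(1) bezout_int[of c p] by (metis coprime_iff_gcd_eq_1)
  then have "(of_int u * of_int c + of_int v * of_int p :: complex) = 1"
    by (metis of_int_1 of_int_add of_int_mult)
  then have "x = (of_int u * of_int c + of_int v * of_int p) * x" by simp
  then have "x = of_int u * (of_int c * x) + of_int p * (of_int v * x)"
    by (simp add: algebra_simps)
  moreover have "of_int u * (of_int c * x) \<in> ideal_gen a p"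
    using ideal_gen_mult[OF assms(3)] by simp
  moreover have "of_int p * (of_int v * x) \<in> ideal_gen a p"
    using ideal_gen_of_int_mult assms(2) by simp
  ultimately show ?thesis using ideal_gen_add by metis
qed

text \<open>Thue's lemma: pigeonhole on \<open>b\<^sub>0 x - a\<^sub>0 y\<close> modulo \<open>p\<close> over the box gives
  \<open>z = x + y \<omega>\<close> with \<open>b\<^sub>0 z \<in> (a, p)\<close>, where \<open>a = a\<^sub>0 + b\<^sub>0 \<omega>\<close>.\<close>
lemma ideal_gen_small_element:
  assumes a: "a \<in> \<O>" and p: "prime p" "p dvd inorm a" "\<not> of_int p \<preceq> a"
  obtains x where "x \<in> ideal_gen a p" "x \<noteq> 0" "inorm x \<le> (2 * sqrt n\<^sub>\<omega> + t\<^sub>\<omega>) * p"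
proof -
  obtain a0 b0 where a0b0: "a = of_int a0 + of_int b0 * \<omega>" using a unfolding Od_iff by blast
  have b0: "\<not> p dvd b0"
    using prime_dvd_coords[OF p(1)] p(2,3) a0b0 inorm_coords by metis
  have "real_of_int n\<^sub>\<omega> \<ge> 1" "real_of_int t\<^sub>\<omega> \<ge> 0" "real_of_int p > 0"
    using norm_omega_pos trace_omega_cases prime_gt_0_int[OF p(1)] by auto
  then obtain A B :: nat where AB: "real_of_int p < (real A + 1) * (real B + 1)"
      "real A ^ 2 + t\<^sub>\<omega> * real A * real B + n\<^sub>\<omega> * real B ^ 2 \<le> (2 * sqrt n\<^sub>\<omega> + t\<^sub>\<omega>) * p"
    by (rule box_for_quadratic_form)
  have "real_of_int p < real_of_int (int ((A + 1) * (B + 1)))" using AB(1) by (simp add: algebra_simps)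
  then have "p < int ((A + 1) * (B + 1))" by (simp only: of_int_less_iff)
  with prime_gt_0_int[OF p(1)] obtain x y where xy: "(x, y) \<noteq> (0, 0)" "\<bar>x\<bar> \<le> A" "\<bar>y\<bar> \<le> B" "p dvd b0 * x - a0 * y"
    by (rule pigeonhole_linear_form[where a = a0 and b = b0]) simp_all
  obtain k where k: "b0 * x - a0 * y = p * k" using xy(4) by (elim dvdE)
  define z where "z = of_int x + of_int y * \<omega>"
  have "of_int b0 * z = of_int (b0 * x - a0 * y) + of_int y * a"
    unfolding z_def a0b0 by (simp add: algebra_simps)
  also have "\<dots> = of_int p * of_int k + of_int y * a" using k by simp
  also have "\<dots> \<in> ideal_gen a p"
    using ideal_gen_add[OF ideal_gen_of_int_mult ideal_gen_mult[OF ideal_gen_generator]] by simp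
  finally have "z \<in> ideal_gen a p"
    using ideal_gen_coprime_cancel[of b0 p z a] b0 p(1) prime_imp_coprime[of p b0]
    unfolding z_def by (simp add: coprime_commute)
  moreover have "z \<noteq> 0" using xy(1) Od_coords_unique[of x y 0 0] unfolding z_def by auto
  moreover have "inorm z \<le> (2 * sqrt n\<^sub>\<omega> + t\<^sub>\<omega>) * p"
  proof -
    have "real_of_int (inorm z) \<le> of_int (int A ^ 2 + t\<^sub>\<omega> * int A * int B + n\<^sub>\<omega> * int B ^ 2)"
      using inorm_coords_le[OF xy(2,3)] unfolding z_def of_int_le_iff .
    then show ?thesis using AB(2) by simp
  qed
  ultimately show ?thesis using that by blast
qed

lemma ideal_gen_min_inorm:
  assumes "a \<in> \<O>" "a \<noteq> 0"
  obtains g where "g \<in> ideal_gen a p" "g \<noteq> 0"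
    "\<And>y. y \<in> ideal_gen a p \<Longrightarrow> y \<noteq> 0 \<Longrightarrow> inorm g \<le> inorm y"
proof -
  define P where "P = (\<lambda>x. x \<in> ideal_gen a p \<and> x \<noteq> 0)"
  have "P a" unfolding P_def using ideal_gen_generator assms by auto
  then obtain g where g: "P g" and min: "\<And>y. P y \<Longrightarrow> nat (inorm g) \<le> nat (inorm y)"
    using ex_has_least_nat[of P a "\<lambda>x. nat (inorm x)"] by blast
  have "inorm g \<le> inorm y" if "P y" for y
    using min[OF that] inorm_nonneg ideal_gen_subset[OF assms(1)] that unfolding P_def by force
  with g show ?thesis using that unfolding P_def by blast
qed

lemma ideal_gen_divide:
  assumes "g \<in> ideal_gen a p" "s \<in> \<O>" "s \<preceq> g" "s \<noteq> 0" "coprime (inorm s) p"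
  shows "g / s \<in> ideal_gen a p"
proof (rule ideal_gen_coprime_cancel[OF assms(5)])
  have g: "g / s \<in> \<O>" "g = s * (g / s)" using odvdE[OF assms(3,4)] by auto
  then show "g / s \<in> \<O>" by simp
  have "cnj s * g = cnj s * (s * (g / s))" using g(2) by (rule arg_cong)
  also have "\<dots> = (s * cnj s) * (g / s)" by (simp add: algebra_simps)
  finally have "of_int (inorm s) * (g / s) = cnj s * g"
    using mult_cnj_eq_inorm[OF assms(2)] by simp
  then show "of_int (inorm s) * (g / s) \<in> ideal_gen a p"
    using ideal_gen_mult[OF assms(1)] assms(2) by simp
qed

section \<open>Unique factorisation\<close>

lemma oprime_in_Od: "oprime r \<Longrightarrow> r \<in> \<O>"
  unfolding oprime_def by auto

lemma odvd_oprime_power_mult: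
  assumes r: "oprime r"
  shows "x \<in> \<O> \<Longrightarrow> W \<in> \<O> \<Longrightarrow> x \<preceq> r ^ e * W \<Longrightarrow> \<exists>j\<le>e. \<exists>x'\<in>\<O>. x = r ^ j * x' \<and> x' \<preceq> W"
proof (induction e arbitrary: x)
  case (Suc e)
  have rO: "r \<in> \<O>" and r0: "r \<noteq> 0" using r unfolding oprime_def by auto
  have eq: "r ^ Suc e * W = r * (r ^ e * W)" by simp
  show ?case
  proof (cases "r \<preceq> x")
    case True
    have x: "x / r \<in> \<O>" "x = r * (x / r)" using odvdE[OF True r0] by auto
    then have "x / r \<preceq> r ^ e * W" using Suc.prems(3) eq r0 by (metis odvd_mult_cancel)
    then obtain j x' where "j \<le> e" "x' \<in> \<O>" "x / r = r ^ j * x'" "x' \<preceq> W"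
      using Suc.IH[OF x(1) Suc.prems(2)] by blast
    then show ?thesis using x(2) by (intro exI[of _ "Suc j"]) auto
  next
    case False
    obtain y where y: "y \<in> \<O>" "r * (r ^ e * W) = x * y" using Suc.prems(3) eq unfolding odvd_def by metis
    have "r \<preceq> x * y" unfolding y(2)[symmetric] using rO Suc.prems(2) by (intro odvd_triv_left) auto
    then have "r \<preceq> y" using r False Suc.prems(1) y(1) unfolding oprime_def by blast
    then obtain y' where y': "y' \<in> \<O>" "y = r * y'" unfolding odvd_def by auto
    then have "r ^ e * W = x * y'" using y r0 by (simp add: algebra_simps)
    then have "x \<preceq> r ^ e * W" unfolding odvd_def using y' by auto
    then show ?thesis using Suc.IH[OF Suc.prems(1,2)] le_SucI by blast
  qed
qed auto

lemma odvd_prod_oprime_powers: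
  assumes "finite P" "\<And>i. i \<in> P \<Longrightarrow> oprime (f i)"
  shows "x \<in> \<O> \<Longrightarrow> x \<preceq> (\<Prod>i\<in>P. f i ^ e i) \<Longrightarrow>
    \<exists>v g. ounit d v \<and> (\<forall>i\<in>P. g i \<le> e i) \<and> x = v * (\<Prod>i\<in>P. f i ^ g i)"
  using assms
proof (induction P arbitrary: x rule: finite_induct)
  case empty
  then show ?case by (intro exI[of _ x]) (simp add: ounit_def)
next
  case (insert i P)
  have "(\<Prod>i\<in>P. f i ^ e i) \<in> \<O>" using insert.prems oprime_in_Od by auto
  moreover have "x \<preceq> f i ^ e i * (\<Prod>i\<in>P. f i ^ e i)" using insert by simp
  ultimately obtain j x' where j: "j \<le> e i" "x' \<in> \<O>" "x = f i ^ j * x'" "x' \<preceq> (\<Prod>i\<in>P. f i ^ e i)"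
    using odvd_oprime_power_mult insert.prems by (meson insertI1)
  obtain v g where vg: "ounit d v" "\<forall>i\<in>P. g i \<le> e i" "x' = v * (\<Prod>i\<in>P. f i ^ g i)"
    using insert.IH[OF j(2) j(4)] insert.prems by blast
  have "(\<Prod>k\<in>P. f k ^ (g(i := j)) k) = (\<Prod>k\<in>P. f k ^ g k)"
    using insert.hyps(2) by (intro prod.cong) auto
  then have "x = v * (\<Prod>k\<in>insert i P. f k ^ (g(i := j)) k)"
    using insert.hyps j vg by (simp add: algebra_simps)
  moreover have "\<forall>k\<in>insert i P. (g(i := j)) k \<le> e k" using vg j by auto
  ultimately show ?case using vg by blast
qed

lemma oprime_odvd_prod_powers:
  assumes "finite P" "\<And>k. k \<in> P \<Longrightarrow> f k \<in> \<O>" "i \<in> P" "0 < g i"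
  shows "f i \<preceq> (\<Prod>k\<in>P. f k ^ g k)"
proof -
  have "(\<Prod>k\<in>P. f k ^ g k) = f i * (f i ^ (g i - 1) * (\<Prod>k\<in>P - {i}. f k ^ g k))"
    using assms by (simp add: prod.remove power_eq_if)
  moreover have "(\<Prod>k\<in>P - {i}. f k ^ g k) \<in> \<O>" using assms(2) by (intro Od_prod Od_power) auto
  ultimately show ?thesis using assms by (simp add: odvd_triv_left)
qed

lemma unitary_divisor_exponents:
  assumes P: "finite P" "\<And>i. i \<in> P \<Longrightarrow> oprime (f i)"
    and uv: "ounit d u" "ounit d v" and ge: "\<forall>i\<in>P. g i \<le> e i"
    and x: "x = v * (\<Prod>i\<in>P. f i ^ g i)" and Z: "Z = u * (\<Prod>i\<in>P. f i ^ e i)"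
    and coprime: "orel_prime d x (Z / x)" and i: "i \<in> P"
  shows "g i = 0 \<or> g i = e i"
proof (rule ccontr)
  assume "\<not> (g i = 0 \<or> g i = e i)"
  then have gi: "0 < g i" "0 < e i - g i" using ge i by auto
  have fO: "\<And>k. k \<in> P \<Longrightarrow> f k \<in> \<O>" using P(2) oprime_in_Od by blast
  have "(\<Prod>k\<in>P. f k ^ g k) \<noteq> 0" using P unfolding oprime_def by auto
  moreover have "(\<Prod>k\<in>P. f k ^ e k) = (\<Prod>k\<in>P. f k ^ g k) * (\<Prod>k\<in>P. f k ^ (e k - g k))"
    unfolding prod.distrib[symmetric] by (rule prod.cong) (use ge in \<open>auto simp flip: power_add\<close>)
  ultimately have Zx: "Z / x = (u * cnj v) * (\<Prod>k\<in>P. f k ^ (e k - g k))"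
    unfolding Z x by (simp add: divide_inverse ounit_inverse[OF uv(2)] algebra_simps)
  have "f i \<preceq> x"
    unfolding x using oprime_odvd_prod_powers[where f = f and g = g, OF P(1) fO i gi(1)] uv(2)
    by (simp add: odvd_mult_left ounit_iff_inorm)
  moreover have "f i \<preceq> Z / x"
    unfolding Zx using oprime_odvd_prod_powers[where f = f and g = "\<lambda>k. e k - g k", OF P(1) fO i] gi(2) uv
    by (simp add: odvd_mult_left ounit_iff_inorm)
  ultimately have "ounit d (f i)" using coprime fO[OF i] unfolding orel_prime_def by blast
  then show False using P(2)[OF i] unfolding oprime_def by blast
qed

section \<open>Class number one\<close>

definition inert :: "int \<Rightarrow> bool" where
  "inert q \<longleftrightarrow> (\<forall>x\<in>\<O>. q dvd inorm x \<longrightarrow> of_int q \<preceq> x)"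

end

locale class_number_one = imag_quadratic +
  fixes K :: int
  assumes small_primes: "\<And>q. prime q \<Longrightarrow> q \<le> K \<Longrightarrow> inert q \<or> (\<exists>r\<in>\<O>. inorm r = q)"
    and Thue_bound: "4 * n\<^sub>\<omega> < (K + 1 - t\<^sub>\<omega>)\<^sup>2" "t\<^sub>\<omega> \<le> K"
begin

lemma Thue_bound_real: "2 * sqrt n\<^sub>\<omega> + t\<^sub>\<omega> < real_of_int K + 1"
proof -
  have "sqrt (4 * n\<^sub>\<omega>) < sqrt ((K + 1 - t\<^sub>\<omega>)\<^sup>2)"
    using Thue_bound(1) by (simp only: real_sqrt_less_iff flip: of_int_less_iff)
  then have "2 * sqrt n\<^sub>\<omega> < K + 1 - t\<^sub>\<omega>"
    using Thue_bound(2) by (simp add: real_sqrt_mult)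
  then show ?thesis by simp
qed

lemma odvd_inorm_factor_if_small_prime:
  assumes g: "g \<in> \<O>" and q: "prime q" "q \<le> K" "q dvd inorm g" "coprime q p"
  obtains s where "s \<in> \<O>" "s \<preceq> g" "inorm s > 1" "coprime (inorm s) p"
proof -
  have q1: "q > 1" using q(1) prime_gt_1_int by auto
  consider "inert q" | r where "r \<in> \<O>" "inorm r = q" using small_primes q by blast
  then show ?thesis
  proof cases
    case 1
    then have "of_int q \<preceq> g" using q g unfolding inert_def by blast
    moreover have "inorm (of_int q) > 1" using q1 by (simp add: one_less_power)
    ultimately show ?thesis using q(4) by (intro that[of "of_int q"]) simp_all
  next
    case (2 r)
    have "r \<preceq> of_int q" using odvd_cnj_self[OF 2(1)] 2(2) by simp
    also have "of_int q \<preceq> g * cnj g"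
      using mult_cnj_eq_inorm[OF g] q(3) of_int_odvd_of_int_iff by simp
    finally have "r \<preceq> g \<or> r \<preceq> cnj g"
      using inorm_prime_imp_oprime[OF 2 q(1)] g unfolding oprime_def by auto
    then have "r \<preceq> g \<or> cnj r \<preceq> g" using odvd_cnj[of r "cnj g"] by auto
    then show ?thesis
    proof
      assume "r \<preceq> g"
      then show ?thesis using that[of r] 2 q1 q(4) by simp
    next
      assume "cnj r \<preceq> g"
      then show ?thesis using that[of "cnj r"] 2 q1 q(4) by simp
    qed
  qed
qed

lemma ideal_gen_min_inorm_no_small_prime:
  assumes a: "a \<in> \<O>" and g: "g \<in> ideal_gen a p" "g \<noteq> 0"
    and g_min: "\<And>y. y \<in> ideal_gen a p \<Longrightarrow> y \<noteq> 0 \<Longrightarrow> inorm g \<le> inorm y"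
    and q: "prime q" "q \<le> K" "q dvd inorm g" "coprime q p"
  shows False
proof -
  have gO: "g \<in> \<O>" using ideal_gen_subset[OF a g(1)] .
  obtain s where s: "s \<in> \<O>" "s \<preceq> g" "inorm s > 1" "coprime (inorm s) p"
    using odvd_inorm_factor_if_small_prime[OF gO q] by blast
  have "s \<noteq> 0" using s(3) by auto
  have g': "g / s \<in> \<O>" "g = s * (g / s)" using odvdE[OF s(2) \<open>s \<noteq> 0\<close>] by auto
  then have "g / s \<noteq> 0" using g(2) by auto
  then have "inorm (g / s) > 0" using inorm_nonneg[OF g'(1)] inorm_eq_0_iff[OF g'(1)] by simp
  then have "1 * inorm (g / s) < inorm s * inorm (g / s)"
    using s(3) by (intro mult_strict_right_mono) auto
  also have "\<dots> = inorm g" using inorm_mult[OF s(1) g'(1)] by (simp only: g'(2)[symmetric])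
  finally have "inorm (g / s) < inorm g" by simp
  moreover have "g / s \<in> ideal_gen a p" using ideal_gen_divide[OF g(1) s(1,2) \<open>s \<noteq> 0\<close> s(4)] .
  ultimately show False using g_min \<open>g / s \<noteq> 0\<close> by fastforce
qed

text \<open>An element of least norm in the ideal \<open>(a, p)\<close> has norm \<open>k p\<close> with \<open>k \<le> K\<close> by
  Thue's lemma, and \<open>k\<close> has no prime factor by the previous lemma.\<close>
lemma inorm_eq_prime:
  assumes p: "prime p" and a: "a \<in> \<O>" "p dvd inorm a" "\<not> of_int p \<preceq> a"
  shows "\<exists>r\<in>\<O>. inorm r = p"
proof (cases "p \<le> K")
  case True
  then show ?thesis using small_primes[OF p True] a unfolding inert_def by blast
next
  case False
  have p1: "p > 1" using p prime_gt_1_int by auto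
  have "a \<noteq> 0" using a(3) by auto
  then obtain g where g: "g \<in> ideal_gen a p" "g \<noteq> 0"
    and g_min: "\<And>y. y \<in> ideal_gen a p \<Longrightarrow> y \<noteq> 0 \<Longrightarrow> inorm g \<le> inorm y"
    using ideal_gen_min_inorm[OF a(1)] by blast
  have gO: "g \<in> \<O>" using ideal_gen_subset[OF a(1) g(1)] .
  obtain k where k: "inorm g = p * k" using ideal_gen_dvd_inorm[OF a(1,2) g(1)] by blast
  have "inorm g > 0" using inorm_nonneg[OF gO] inorm_eq_0_iff[OF gO] g(2) by linarith
  then have "k > 0" using k p1 by (simp add: zero_less_mult_iff)
  obtain x where x: "x \<in> ideal_gen a p" "x \<noteq> 0" "inorm x \<le> (2 * sqrt n\<^sub>\<omega> + t\<^sub>\<omega>) * p"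
    using ideal_gen_small_element[OF a(1) p a(2,3)] .
  have "real_of_int (p * k) \<le> inorm x" unfolding k[symmetric] of_int_le_iff using g_min[OF x(1,2)] .
  also have "\<dots> \<le> (2 * sqrt n\<^sub>\<omega> + t\<^sub>\<omega>) * p" by (rule x(3))
  also have "\<dots> < (real_of_int K + 1) * p" using Thue_bound_real p1 by (intro mult_strict_right_mono) auto
  finally have "real_of_int (p * k) < real_of_int (p * (K + 1))" by (simp add: algebra_simps)
  then have "p * k < p * (K + 1)" by (simp only: of_int_less_iff)
  then have "k \<le> K" using p1 by simp
  have "k = 1"
  proof (rule ccontr)
    assume "k \<noteq> 1"
    then obtain q where q: "q dvd k" "prime q" using prime_divisor_exists[of k] \<open>k > 0\<close> by auto
    have "q \<le> K" using zdvd_imp_le[OF q(1) \<open>k > 0\<close>] \<open>k \<le> K\<close> by linarith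
    moreover have "coprime q p" using \<open>q \<le> K\<close> False p q(2) by (intro primes_coprime) auto
    moreover have "q dvd inorm g" using q(1) k by simp
    ultimately show False using ideal_gen_min_inorm_no_small_prime[OF a(1) g g_min q(2)] by blast
  qed
  then show ?thesis using k gO by auto
qed

lemma oprime_of_int_if_not_inorm:
  assumes p: "prime p" and not_norm: "\<not> (\<exists>r\<in>\<O>. inorm r = p)"
  shows "oprime (of_int p)"
proof -
  have "of_int p \<preceq> a \<or> of_int p \<preceq> b" if ab: "a \<in> \<O>" "b \<in> \<O>" "of_int p \<preceq> a * b" for a b
  proof -
    have "p * p dvd inorm a * inorm b"
      using odvd_imp_inorm_dvd[OF _ ab(3)] ab inorm_mult by (simp add: power2_eq_square)
    then have "p dvd inorm a \<or> p dvd inorm b"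
      using p prime_dvd_mult_int dvd_mult_left by blast
    then show ?thesis using inorm_eq_prime[OF p] not_norm ab by blast
  qed
  moreover have "p\<^sup>2 > 1" using prime_gt_1_int[OF p] by (simp add: one_less_power)
  ultimately show ?thesis unfolding oprime_def ounit_iff_inorm using p by auto
qed

section \<open>Lifting rational integers\<close>

definition prime_over :: "nat \<Rightarrow> complex" where
  "prime_over p =
     (if \<exists>r\<in>\<O>. inorm r = int p then SOME r. r \<in> \<O> \<and> inorm r = int p else of_nat p)"

definition lift_exp :: "nat \<Rightarrow> nat" where
  "lift_exp p = (if \<exists>r\<in>\<O>. inorm r = int p then 2 else 1)"

text \<open>The image of \<open>m = \<Prod> p\<^sup>k\<close> is \<open>\<Prod> \<pi>\<^sub>p\<^bsup>e\<^sub>p k\<^esup>\<close>, where \<open>\<pi>\<^sub>p\<close> is an element of norm \<open>p\<close> if there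
  is one (and then \<open>e\<^sub>p = 2\<close>) and \<open>p\<close> itself otherwise (and then \<open>e\<^sub>p = 1\<close>); in both cases
  \<open>|\<pi>\<^sub>p\<^bsup>e\<^sub>p\<^esup>| = p\<close>.\<close>
definition lift :: "nat \<Rightarrow> complex" where
  "lift m = (\<Prod>p\<in>prime_factors m. prime_over p ^ (lift_exp p * multiplicity p m))"

lemma prime_over:
  assumes "prime p"
  shows "oprime (prime_over p)" "cmod (prime_over p) ^ lift_exp p = p"
proof -
  have p: "prime (int p)" using assms by simp
  have "oprime (prime_over p) \<and> cmod (prime_over p) ^ lift_exp p = p"
  proof (cases "\<exists>r\<in>\<O>. inorm r = int p")
    case True
    then have "\<exists>r. r \<in> \<O> \<and> inorm r = int p" by blast
    then have "prime_over p \<in> \<O> \<and> inorm (prime_over p) = int p"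
      unfolding prime_over_def using True by (simp only: if_True) (rule someI_ex)
    then have r: "prime_over p \<in> \<O>" "inorm (prime_over p) = int p" by auto
    have "cmod (prime_over p) ^ 2 = p" using inorm_eq_cmod_sq[OF r(1)] r(2) by simp
    then show ?thesis using inorm_prime_imp_oprime[OF r p] True unfolding lift_exp_def by simp
  next
    case False
    then have "prime_over p = of_int (int p)" "lift_exp p = 1"
      unfolding prime_over_def lift_exp_def by simp_all
    then show ?thesis using oprime_of_int_if_not_inorm[OF p] False by simp
  qed
  then show "oprime (prime_over p)" "cmod (prime_over p) ^ lift_exp p = p" by auto
qed

lemma lift_in_Od: "lift m \<in> \<O>"
  unfolding lift_def
  by (intro Od_prod Od_power oprime_in_Od prime_over(1)) (rule in_prime_factors_imp_prime)

lemma lift_superset: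
  assumes "finite Q" "prime_factors m \<subseteq> Q" "\<And>p. p \<in> Q \<Longrightarrow> prime p" "m > 0"
  shows "lift m = (\<Prod>p\<in>Q. prime_over p ^ (lift_exp p * multiplicity p m))"
  unfolding lift_def
proof (rule prod.mono_neutral_left[OF assms(1,2)], intro ballI)
  fix p assume "p \<in> Q - prime_factors m"
  then have "multiplicity p m = 0"
    using assms(3,4) by (auto simp: in_prime_factors_iff not_dvd_imp_multiplicity_0)
  then show "prime_over p ^ (lift_exp p * multiplicity p m) = 1" by simp
qed

lemma cmod_lift:
  assumes "m > 0"
  shows "cmod (lift m) = m"
proof -
  have "cmod (lift m) = (\<Prod>p\<in>prime_factors m. (cmod (prime_over p) ^ lift_exp p) ^ multiplicity p m)"
    unfolding lift_def by (simp add: prod_norm[symmetric] norm_power power_mult)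
  also have "\<dots> = (\<Prod>p\<in>prime_factors m. real p ^ multiplicity p m)"
    by (intro prod.cong refl) (simp add: prime_over(2) in_prime_factors_imp_prime)
  also have "\<dots> = real (\<Prod>p\<in>prime_factors m. p ^ multiplicity p m)" by simp
  also have "\<dots> = m" using assms prod_prime_factors[of m] by simp
  finally show ?thesis .
qed

lemma lift_nonzero: "m > 0 \<Longrightarrow> lift m \<noteq> 0"
  using cmod_lift[of m] by auto

lemma inorm_lift:
  assumes "m > 0"
  shows "inorm (lift m) = (int m)\<^sup>2"
proof -
  have "real_of_int (inorm (lift m)) = real_of_int ((int m)\<^sup>2)"
    using inorm_eq_cmod_sq[OF lift_in_Od, of m] cmod_lift[OF assms] by simp
  then show ?thesis by (simp only: of_int_eq_iff)
qed

lemma lift_mult: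
  assumes "a > 0" "b > 0"
  shows "lift (a * b) = lift a * lift b"
proof -
  define Q where "Q = prime_factors a \<union> prime_factors b"
  have Q: "finite Q" "\<And>p. p \<in> Q \<Longrightarrow> prime p" "prime_factors (a * b) = Q"
    unfolding Q_def using assms by (auto simp: prime_factors_product)
  have "lift (a * b) = (\<Prod>p\<in>Q. prime_over p ^ (lift_exp p * multiplicity p (a * b)))"
    using lift_superset[OF Q(1) _ Q(2)] Q(3) assms by simp
  also have "\<dots> = (\<Prod>p\<in>Q. prime_over p ^ (lift_exp p * multiplicity p a)
      * prime_over p ^ (lift_exp p * multiplicity p b))"
    using assms Q(2)
    by (intro prod.cong refl) (simp add: prime_elem_multiplicity_mult_distrib distrib_left power_add)
  also have "\<dots> = lift a * lift b"
    unfolding prod.distrib using lift_superset[OF Q(1) _ Q(2)] assms unfolding Q_def by simp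
  finally show ?thesis .
qed

end

section \<open>Unitary divisors of lifts\<close>

lemma unitary_divisor_of_prime_set:
  fixes n :: nat
  assumes n: "n > 0" and S: "S \<subseteq> prime_factors n"
  defines "c \<equiv> \<Prod>p\<in>S. p ^ multiplicity p n"
  shows "c dvd n" "coprime c (n div c)"
    "\<And>p. prime p \<Longrightarrow> multiplicity p c = (if p \<in> S then multiplicity p n else 0)"
proof -
  have S_prime: "finite S" "\<And>p. p \<in> S \<Longrightarrow> prime p"
    using S finite_subset[OF S] by auto
  show mult: "\<And>p. prime p \<Longrightarrow> multiplicity p c = (if p \<in> S then multiplicity p n else 0)"
    unfolding c_def by (rule multiplicity_prod_prime_powers) (use S_prime in auto)
  have "c > 0" unfolding c_def using S_prime by (auto intro!: prod_pos simp: prime_gt_0_nat)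
  then show "c dvd n" by (intro multiplicity_le_imp_dvd) (simp_all add: mult)
  then have nc: "n = c * (n div c)" by simp
  show "coprime c (n div c)"
  proof (rule ccontr)
    assume "\<not> coprime c (n div c)"
    then have "gcd c (n div c) \<noteq> 1" by (simp add: coprime_iff_gcd_eq_1)
    then obtain q where "prime q" "q dvd gcd c (n div c)" using prime_factor_nat by blast
    then have q: "prime q" "q dvd c" "q dvd n div c" by auto
    have "n div c > 0" using n nc by (cases "n div c = 0") auto
    then have "multiplicity q (n div c) > 0" "multiplicity q c > 0"
      using q \<open>c > 0\<close> by (simp_all add: prime_multiplicity_gt_zero_iff)
    moreover have "multiplicity q (c * (n div c)) = multiplicity q c + multiplicity q (n div c)"
      using \<open>c > 0\<close> \<open>n div c > 0\<close> q(1) by (simp add: prime_elem_multiplicity_mult_distrib)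
    then have "multiplicity q n = multiplicity q c + multiplicity q (n div c)"
      by (simp only: nc[symmetric])
    ultimately show False using mult[OF q(1)] by (auto split: if_splits)
  qed
qed

lemma (in imag_quadratic) orel_prime_if_coprime_inorm:
  assumes "x \<in> \<O>" "y \<in> \<O>" "coprime (inorm x) (inorm y)"
  shows "orel_prime d x y"
  unfolding orel_prime_def
proof (intro ballI impI)
  fix c assume c: "c \<in> \<O>" "c \<preceq> x \<and> c \<preceq> y"
  then have "inorm c dvd inorm x" "inorm c dvd inorm y" using odvd_imp_inorm_dvd by auto
  then have "is_unit (inorm c)" using assms(3) coprime_common_divisor by blast
  then show "ounit d c" using inorm_nonneg[OF c(1)] c(1) unfolding ounit_iff_inorm by simp
qed

locale Aset_fundamental = imag_quadratic +
  assumes Aset_assoc_exists: "\<And>z. z \<in> \<O> \<Longrightarrow> z \<noteq> 0 \<Longrightarrow> \<exists>u. ounit d u \<and> u * z \<in> Aset d"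
    and Aset_assoc_unique: "\<And>x u. x \<in> Aset d \<Longrightarrow> ounit d u \<Longrightarrow> u * x \<in> Aset d \<Longrightarrow> u = 1"
begin

definition Aset_rep :: "complex \<Rightarrow> complex" where
  "Aset_rep z = (SOME u. ounit d u \<and> u * z \<in> Aset d) * z"

lemma Aset_rep:
  assumes "z \<in> \<O>" "z \<noteq> 0"
  obtains u where "ounit d u" "Aset_rep z = u * z" "Aset_rep z \<in> Aset d"
  using someI_ex[OF Aset_assoc_exists[OF assms]] that unfolding Aset_rep_def by blast

lemma Aset_rep_eqI:
  assumes x: "x \<in> Aset d" "x = v * z" and v: "ounit d v" and z: "z \<in> \<O>" "z \<noteq> 0"
  shows "x = Aset_rep z"
proof -
  obtain u where u: "ounit d u" "Aset_rep z = u * z" "Aset_rep z \<in> Aset d"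
    using Aset_rep[OF z] .
  have "x = (v * cnj u) * Aset_rep z"
    using x(2) u(2) ounit_mult_cnj[OF u(1)] by (simp add: algebra_simps)
  moreover have "ounit d (v * cnj u)" using ounit_mult[OF v ounit_cnj[OF u(1)]] .
  ultimately have "v * cnj u = 1" using Aset_assoc_unique[OF u(3)] x(1) by simp
  then show ?thesis using \<open>x = (v * cnj u) * Aset_rep z\<close> by simp
qed

lemma cmod_Aset_rep:
  assumes "z \<in> \<O>" "z \<noteq> 0"
  shows "cmod (Aset_rep z) = cmod z"
proof -
  obtain u where "ounit d u" "Aset_rep z = u * z" using Aset_rep[OF assms] .
  then show ?thesis by (simp add: norm_mult ounit_cmod)
qed

end

locale unitary_lift = class_number_one + Aset_fundamental
begin

lemma lift_Aset_rep:
  assumes "m > 0"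
  obtains u where "ounit d u" "Aset_rep (lift m) = u * lift m" "Aset_rep (lift m) \<in> Aset d"
  using Aset_rep[OF lift_in_Od lift_nonzero[OF assms]] .

lemma cmod_Aset_rep_lift: "m > 0 \<Longrightarrow> cmod (Aset_rep (lift m)) = m"
  using cmod_Aset_rep[OF lift_in_Od lift_nonzero] cmod_lift by simp

lemma unitary_divisor_imp_diamond:
  assumes n: "n > 0" and c: "c dvd n" "coprime c (n div c)"
  shows "diamond d (Aset_rep (lift c)) (Aset_rep (lift n))"
proof -
  define m where "m = n div c"
  have pos: "c > 0" "m > 0" using n c(1) unfolding m_def by (auto intro: dvd_pos_nat)
  obtain v where v: "ounit d v" "Aset_rep (lift c) = v * lift c" "Aset_rep (lift c) \<in> Aset d"
    using lift_Aset_rep[OF pos(1)] .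
  obtain u where u: "ounit d u" "Aset_rep (lift n) = u * lift n"
    using lift_Aset_rep[OF n] .
  define y where "y = u * cnj v * lift m"
  have uv: "u \<in> \<O>" "inorm u = 1" "cnj v \<in> \<O>" "inorm (cnj v) = 1" "v \<in> \<O>" "inorm v = 1" "v \<noteq> 0"
    using u(1) v(1) unfolding ounit_iff_inorm by auto
  have "Aset_rep (lift c) * y = (v * cnj v) * (u * (lift c * lift m))"
    unfolding v(2) y_def by (simp add: algebra_simps)
  also have "\<dots> = Aset_rep (lift n)"
    using ounit_mult_cnj[OF v(1)] u(2) lift_mult[OF pos] c(1) unfolding m_def by simp
  finally have Z: "Aset_rep (lift n) = Aset_rep (lift c) * y" ..
  have y: "y \<in> \<O>" "inorm y = (int m)\<^sup>2"
    unfolding y_def using uv lift_in_Od inorm_lift[OF pos(2)] by (simp_all add: inorm_mult)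
  have x: "Aset_rep (lift c) \<in> \<O>" "inorm (Aset_rep (lift c)) = (int c)\<^sup>2" "Aset_rep (lift c) \<noteq> 0"
    unfolding v(2) using uv lift_in_Od inorm_lift[OF pos(1)] lift_nonzero[OF pos(1)]
    by (simp_all add: inorm_mult)
  have "orel_prime d (Aset_rep (lift c)) y"
    using orel_prime_if_coprime_inorm[OF x(1) y(1)] x(2) y(2) c(2) unfolding m_def by simp
  moreover have "Aset_rep (lift c) \<preceq> Aset_rep (lift n)"
    unfolding odvd_def using Z y(1) by blast
  ultimately show ?thesis
    unfolding diamond_def using v(3) Z x(3) by simp
qed

lemma diamond_lift_exponents:
  assumes n: "n > 0" and x: "diamond d x (Aset_rep (lift n))"
  obtains v g where "ounit d v"
    "\<And>p. p \<in> prime_factors n \<Longrightarrow> g p = 0 \<or> g p = lift_exp p * multiplicity p n"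
    "x = v * (\<Prod>p\<in>prime_factors n. prime_over p ^ g p)"
proof -
  define P where "P = prime_factors n"
  define e where "e = (\<lambda>p. lift_exp p * multiplicity p n)"
  have P: "finite P" "\<And>p. p \<in> P \<Longrightarrow> oprime (prime_over p)"
    unfolding P_def using prime_over(1) by auto
  obtain u where u: "ounit d u" "Aset_rep (lift n) = u * (\<Prod>p\<in>P. prime_over p ^ e p)"
    using lift_Aset_rep[OF n] unfolding lift_def P_def e_def by blast
  have xO: "x \<in> \<O>" and dvd: "x \<preceq> Aset_rep (lift n)"
    and coprime: "orel_prime d x (Aset_rep (lift n) / x)"
    using x unfolding diamond_def Aset_def by auto
  have "x \<preceq> cnj u * Aset_rep (lift n)"
    using odvd_mult_left[OF dvd] u(1) unfolding ounit_iff_inorm by simp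
  also have "cnj u * Aset_rep (lift n) = (u * cnj u) * (\<Prod>p\<in>P. prime_over p ^ e p)"
    using u(2) by simp
  finally have "x \<preceq> (\<Prod>p\<in>P. prime_over p ^ e p)"
    using ounit_mult_cnj[OF u(1)] by simp
  then obtain v g where vg: "ounit d v" "\<forall>p\<in>P. g p \<le> e p" "x = v * (\<Prod>p\<in>P. prime_over p ^ g p)"
    using odvd_prod_oprime_powers[where f = prime_over and e = e, OF P xO] by blast
  have "g p = 0 \<or> g p = e p" if "p \<in> P" for p
    using unitary_divisor_exponents[OF P u(1) vg(1,2,3) u(2) coprime that] .
  then show ?thesis using that vg unfolding P_def e_def by blast
qed

lemma lift_unitary_divisor:
  assumes n: "n > 0" and S: "S \<subseteq> prime_factors n"
  shows "lift (\<Prod>p\<in>S. p ^ multiplicity p n) =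
    (\<Prod>p\<in>prime_factors n. prime_over p ^ (if p \<in> S then lift_exp p * multiplicity p n else 0))"
proof -
  define c where "c = (\<Prod>p\<in>S. p ^ multiplicity p n)"
  note c = unitary_divisor_of_prime_set[OF n S, folded c_def]
  have "c > 0" using c(1) n by (auto intro: dvd_pos_nat)
  have "prime_factors c \<subseteq> prime_factors n"
    using c(1) \<open>c > 0\<close> n by (intro dvd_prime_factors) auto
  then have "lift c = (\<Prod>p\<in>prime_factors n. prime_over p ^ (lift_exp p * multiplicity p c))"
    using lift_superset[of "prime_factors n" c] \<open>c > 0\<close> by (simp add: in_prime_factors_imp_prime)
  also have "\<dots> = (\<Prod>p\<in>prime_factors n. prime_over p ^ (if p \<in> S then lift_exp p * multiplicity p n else 0))"
    by (intro prod.cong refl) (simp add: c(3) in_prime_factors_imp_prime)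
  finally show ?thesis unfolding c_def .
qed

lemma diamond_imp_unitary_divisor:
  assumes n: "n > 0" and x: "diamond d x (Aset_rep (lift n))"
  shows "\<exists>c. c dvd n \<and> coprime c (n div c) \<and> x = Aset_rep (lift c)"
proof -
  obtain v g where v: "ounit d v"
    and g: "\<And>p. p \<in> prime_factors n \<Longrightarrow> g p = 0 \<or> g p = lift_exp p * multiplicity p n"
    and x_eq: "x = v * (\<Prod>p\<in>prime_factors n. prime_over p ^ g p)"
    using diamond_lift_exponents[OF assms] by blast
  define S where "S = {p\<in>prime_factors n. g p \<noteq> 0}"
  define c where "c = (\<Prod>p\<in>S. p ^ multiplicity p n)"
  have S: "S \<subseteq> prime_factors n" unfolding S_def by auto
  note c = unitary_divisor_of_prime_set[OF n S, folded c_def]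
  have "c > 0" using c(1) n by (auto intro: dvd_pos_nat)
  have "(\<Prod>p\<in>prime_factors n. prime_over p ^ g p) = lift c"
    unfolding c_def lift_unitary_divisor[OF n S]
  proof (intro prod.cong refl)
    fix p assume "p \<in> prime_factors n"
    then show "prime_over p ^ g p = prime_over p ^ (if p \<in> S then lift_exp p * multiplicity p n else 0)"
      using g[of p] unfolding S_def by auto
  qed
  then have "x = Aset_rep (lift c)"
    using x_eq x Aset_rep_eqI[OF _ _ v lift_in_Od lift_nonzero[OF \<open>c > 0\<close>]]
    unfolding diamond_def by simp
  then show ?thesis using c(1,2) by blast
qed

lemma delta1_star_Aset_rep_lift:
  assumes n: "n > 0"
  shows "delta1_star d (Aset_rep (lift n)) = sigma_star n"
proof -
  define T where "T = {c. c dvd n \<and> coprime c (n div c)}"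
  have T_pos: "\<And>c. c \<in> T \<Longrightarrow> c > 0" unfolding T_def using n dvd_pos_nat by blast
  have "delta1_star d (Aset_rep (lift n)) = (\<Sum>x\<in>{x. diamond d x (Aset_rep (lift n))}. cmod x)"
    unfolding delta1_star_def ..
  also have "\<dots> = (\<Sum>c\<in>T. real c)"
  proof (rule sum.reindex_bij_witness[where i = "\<lambda>c. Aset_rep (lift c)" and j = "\<lambda>x. nat \<lfloor>cmod x\<rfloor>"])
    fix x assume "x \<in> {x. diamond d x (Aset_rep (lift n))}"
    then obtain c where c: "c \<in> T" "x = Aset_rep (lift c)"
      using diamond_imp_unitary_divisor[OF n] unfolding T_def by blast
    then have "cmod x = c" using cmod_Aset_rep_lift[OF T_pos] by simp
    then show "Aset_rep (lift (nat \<lfloor>cmod x\<rfloor>)) = x" "nat \<lfloor>cmod x\<rfloor> \<in> T" "real (nat \<lfloor>cmod x\<rfloor>) = cmod x"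
      using c by simp_all
  next
    fix c assume "c \<in> T"
    then show "nat \<lfloor>cmod (Aset_rep (lift c))\<rfloor> = c" "Aset_rep (lift c) \<in> {x. diamond d x (Aset_rep (lift n))}"
      using cmod_Aset_rep_lift[OF T_pos] unitary_divisor_imp_diamond[OF n] unfolding T_def by auto
  qed
  also have "\<dots> = sigma_star n" unfolding sigma_star_def T_def by simp
  finally show ?thesis .
qed

lemma Aset_rep_lift_in_V_set:
  assumes "n \<in> U_set b"
  shows "Aset_rep (lift n) \<in> V_set d b"
proof -
  have n: "n > 0" "of_nat (sigma_star n) = b * of_nat n" using assms unfolding U_set_def by auto
  then have "b = of_nat (sigma_star n) / of_nat n" by simp
  then have "of_rat b = real (sigma_star n) / real n" by (simp add: of_rat_divide)
  also have "\<dots> = I1_star d (Aset_rep (lift n))"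
    unfolding I1_star_def using delta1_star_Aset_rep_lift[OF n(1)] cmod_Aset_rep_lift[OF n(1)] by simp
  moreover have "Aset_rep (lift n) \<in> Aset d" by (metis lift_Aset_rep n(1))
  ultimately show ?thesis unfolding V_set_def by simp
qed

lemma exists_inj_U_set_V_set: "\<exists>g. (\<forall>n\<in>U_set b. g n \<in> V_set d b) \<and> inj_on g (U_set b)"
proof -
  have "inj_on (\<lambda>n. Aset_rep (lift n)) (U_set b)"
  proof (rule inj_onI)
    fix m n assume "m \<in> U_set b" "n \<in> U_set b" "Aset_rep (lift m) = Aset_rep (lift n)"
    then have "m > 0" "n > 0" "cmod (Aset_rep (lift m)) = cmod (Aset_rep (lift n))"
      unfolding U_set_def by auto
    then show "m = n" using cmod_Aset_rep_lift by simp
  qed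
  then show ?thesis using Aset_rep_lift_in_V_set by (intro exI[of _ "\<lambda>n. Aset_rep (lift n)"]) simp
qed

end

section \<open>Fundamental domains for the units\<close>

lemma arg0_cases:
  assumes "z \<noteq> 0"
  shows "(arg0 z > pi \<and> Im z < 0) \<or> (arg0 z = Arg z \<and> 0 \<le> Arg z \<and> Arg z \<le> pi \<and> Im z \<ge> 0)"
proof (cases "Arg z < 0")
  case True
  then show ?thesis using mpi_less_Arg[of z] Arg_neg_iff[of z] unfolding arg0_def by auto
next
  case False
  then show ?thesis using Arg_le_pi[of z] Arg_less_0[of z] unfolding arg0_def by auto
qed

lemma arg0_nonneg: "0 \<le> arg0 z"
  using mpi_less_Arg[of z] pi_gt_zero unfolding arg0_def by auto

lemma arg0_less_pi_iff:
  assumes "z \<noteq> 0"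
  shows "arg0 z < pi \<longleftrightarrow> Im z > 0 \<or> (Im z = 0 \<and> Re z > 0)"
proof -
  have "Im z = 0 \<Longrightarrow> Re z \<noteq> 0" using assms complex_eq_iff by auto
  then show ?thesis using arg0_cases[OF assms] Arg_eq_pi[of z] by (auto simp: less_le)
qed

lemma arg0_less_iff_cos:
  assumes "z \<noteq> 0" "0 < \<theta>" "\<theta> \<le> pi"
  shows "arg0 z < \<theta> \<longleftrightarrow> Im z \<ge> 0 \<and> cos \<theta> * cmod z < Re z"
  using arg0_cases[OF assms(1)]
proof
  assume "arg0 z > pi \<and> Im z < 0"
  then show ?thesis using assms by auto
next
  assume Arg: "arg0 z = Arg z \<and> 0 \<le> Arg z \<and> Arg z \<le> pi \<and> Im z \<ge> 0"
  have "Arg z < \<theta> \<longleftrightarrow> cos \<theta> < cos (Arg z)"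
    using Arg assms by (intro cos_mono_less_eq[symmetric]) auto
  also have "\<dots> \<longleftrightarrow> cos \<theta> * cmod z < Re z"
    using assms(1) by (simp add: cos_Arg pos_less_divide_eq)
  finally show ?thesis using Arg by simp
qed

lemma cmod_less_two_Re_iff: "cmod z < 2 * Re z \<longleftrightarrow> \<bar>Im z\<bar> < sqrt 3 * Re z"
proof (cases "Re z > 0")
  case True
  have "2 * Re z \<le> cmod z \<longleftrightarrow> (2 * Re z)\<^sup>2 \<le> (cmod z)\<^sup>2"
    using power2_le_iff_abs_le[of "cmod z" "2 * Re z"] True by simp
  moreover have "sqrt 3 * Re z \<le> \<bar>Im z\<bar> \<longleftrightarrow> (sqrt 3 * Re z)\<^sup>2 \<le> (Im z)\<^sup>2"
    using power2_le_iff_abs_le[of "\<bar>Im z\<bar>" "sqrt 3 * Re z"] True by simp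
  ultimately show ?thesis by (simp add: not_le[symmetric] cmod_power2 power_mult_distrib)
next
  case False
  then have "sqrt 3 * Re z \<le> 0" by (simp add: mult_nonneg_nonpos)
  then show ?thesis using False norm_ge_zero[of z] abs_ge_zero[of "Im z"] by linarith
qed

lemma upper_half_or_uminus:
  assumes "z \<noteq> 0"
  shows "(Im z > 0 \<or> (Im z = 0 \<and> Re z > 0)) \<or> (Im (-z) > 0 \<or> (Im (-z) = 0 \<and> Re (-z) > 0))"
proof -
  have "Im z = 0 \<Longrightarrow> Re z \<noteq> 0" using assms complex_eq_iff by auto
  then show ?thesis by (cases "Im z" "0 :: real" rule: linorder_cases) auto
qed

context imag_quadratic
begin

lemma Aset_iff_upper:
  assumes "d \<noteq> -1" "d \<noteq> -3"
  shows "x \<in> Aset d \<longleftrightarrow> x \<in> \<O> \<and> x \<noteq> 0 \<and> (Im x > 0 \<or> (Im x = 0 \<and> Re x > 0))"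
  using assms arg0_less_pi_iff[of x] unfolding Aset_def by (auto simp: arg0_nonneg)

lemma Aset_minus_1_iff:
  assumes "d = -1"
  shows "x \<in> Aset d \<longleftrightarrow> x \<in> \<O> \<and> x \<noteq> 0 \<and> Re x > 0 \<and> Im x \<ge> 0"
  using assms arg0_less_iff_cos[of x "pi / 2"] unfolding Aset_def by (auto simp: arg0_nonneg)

lemma Aset_minus_3_iff:
  assumes "d = -3"
  shows "x \<in> Aset d \<longleftrightarrow> x \<in> \<O> \<and> x \<noteq> 0 \<and> Im x \<ge> 0 \<and> Im x < sqrt 3 * Re x"
  using assms arg0_less_iff_cos[of x "pi / 3"] cmod_less_two_Re_iff[of x]
  unfolding Aset_def by (auto simp: arg0_nonneg cos_60 field_simps)

lemma quadratic_form_times_4: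
  "4 * (a\<^sup>2 + t\<^sub>\<omega> * a * b + n\<^sub>\<omega> * b\<^sup>2) = (2 * a + t\<^sub>\<omega> * b)\<^sup>2 + (4 * n\<^sub>\<omega> - t\<^sub>\<omega>) * b\<^sup>2"
  using trace_omega_cases by (auto simp: algebra_simps power2_eq_square)

lemma ounit_cases_norm_omega_ge_2:
  assumes "n\<^sub>\<omega> \<ge> 2" "ounit d u"
  shows "u = 1 \<or> u = -1"
proof -
  obtain a b where ab: "u = of_int a + of_int b * \<omega>" "a\<^sup>2 + t\<^sub>\<omega> * a * b + n\<^sub>\<omega> * b\<^sup>2 = 1"
    using ounit_coords[OF assms(2)] by blast
  have "(2 * a + t\<^sub>\<omega> * b)\<^sup>2 + (4 * n\<^sub>\<omega> - t\<^sub>\<omega>) * b\<^sup>2 = 4"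
    using quadratic_form_times_4[of a b] ab(2) by simp
  moreover have "4 * n\<^sub>\<omega> - t\<^sub>\<omega> \<ge> 7" using assms(1) trace_omega_cases by auto
  ultimately have "b = 0"
  proof (rule_tac ccontr)
    assume "b \<noteq> 0"
    then have "b\<^sup>2 > 0" by simp
    then have "b\<^sup>2 \<ge> 1" by linarith
    then have "(4 * n\<^sub>\<omega> - t\<^sub>\<omega>) * b\<^sup>2 \<ge> 7 * 1" using \<open>4 * n\<^sub>\<omega> - t\<^sub>\<omega> \<ge> 7\<close> by (intro mult_mono) auto
    then show False using \<open>(2 * a + t\<^sub>\<omega> * b)\<^sup>2 + (4 * n\<^sub>\<omega> - t\<^sub>\<omega>) * b\<^sup>2 = 4\<close> zero_le_power2[of "2 * a + t\<^sub>\<omega> * b"]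
      by linarith
  qed
  then show ?thesis using ab by (auto simp: power2_eq_1_iff)
qed

lemma Aset_fundamental_if_norm_omega_ge_2:
  assumes "n\<^sub>\<omega> \<ge> 2" "d \<noteq> -1" "d \<noteq> -3"
  shows "Aset_fundamental d"
proof
  fix z assume z: "z \<in> \<O>" "z \<noteq> 0"
  have units: "ounit d 1" "ounit d (-1)"
    using ounit_of_coords[of 1 0] ounit_of_coords[of "-1" 0] by simp_all
  consider "Im z > 0 \<or> (Im z = 0 \<and> Re z > 0)" | "Im (-z) > 0 \<or> (Im (-z) = 0 \<and> Re (-z) > 0)"
    using upper_half_or_uminus[OF z(2)] by blast
  then show "\<exists>u. ounit d u \<and> u * z \<in> Aset d"
  proof cases
    case 1
    then have "1 * z \<in> Aset d" using z Aset_iff_upper[OF assms(2,3), of z] by simp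
    then show ?thesis using units(1) by blast
  next
    case 2
    then have "(-1) * z \<in> Aset d" using z Aset_iff_upper[OF assms(2,3), of "- z"] by simp
    then show ?thesis using units(2) by blast
  qed
next
  fix x u assume x: "x \<in> Aset d" and u: "ounit d u" and ux: "u * x \<in> Aset d"
  have "Im x > 0 \<or> (Im x = 0 \<and> Re x > 0)" "Im (u * x) > 0 \<or> (Im (u * x) = 0 \<and> Re (u * x) > 0)"
    using Aset_iff_upper[OF assms(2,3), of x] Aset_iff_upper[OF assms(2,3), of "u * x"] x ux by simp_all
  moreover have "u = 1 \<or> u = -1" using ounit_cases_norm_omega_ge_2[OF assms(1) u] .
  ultimately show "u = 1" by auto
qed

lemma omega_minus_1: "d = -1 \<Longrightarrow> \<omega> = \<i>"
  using omega_imaginary[OF d_neg] by simp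

lemma ounit_cases_minus_1:
  assumes "d = -1" "ounit d u"
  shows "u = 1 \<or> u = -1 \<or> u = \<i> \<or> u = -\<i>"
proof -
  obtain a b where ab: "u = of_int a + of_int b * \<omega>" "a\<^sup>2 + t\<^sub>\<omega> * a * b + n\<^sub>\<omega> * b\<^sup>2 = 1"
    using ounit_coords[OF assms(2)] by blast
  then have e: "a\<^sup>2 + b\<^sup>2 = 1" using assms(1) by (simp add: trace_omega_def norm_omega_def)
  then have "a\<^sup>2 \<le> 1" "b\<^sup>2 \<le> 1" using zero_le_power2[of a] zero_le_power2[of b] by linarith+
  then have "a \<in> {-1, 0, 1}" "b \<in> {-1, 0, 1}" unfolding abs_square_le_1 by auto
  then show ?thesis using e ab(1) omega_minus_1[OF assms(1)] by auto
qed

lemma Aset_fundamental_minus_1: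
  assumes "d = -1"
  shows "Aset_fundamental d"
proof
  fix z assume z: "z \<in> \<O>" "z \<noteq> 0"
  have "t\<^sub>\<omega> = 0" "n\<^sub>\<omega> = 1" "\<omega> = \<i>" using assms omega_minus_1 by (simp_all add: trace_omega_def norm_omega_def)
  then have units: "ounit d 1" "ounit d (-1)" "ounit d \<i>" "ounit d (-\<i>)"
    using ounit_of_coords[of 1 0] ounit_of_coords[of "-1" 0] ounit_of_coords[of 0 1]
      ounit_of_coords[of 0 "-1"] by simp_all
  have in_Aset: "u * z \<in> Aset d" if "ounit d u" "Re (u * z) > 0" "Im (u * z) \<ge> 0" for u
    using that z Aset_minus_1_iff[OF assms, of "u * z"] unfolding ounit_iff_inorm by auto
  have "Re z \<noteq> 0 \<or> Im z \<noteq> 0" using z(2) complex_eq_iff by auto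
  then consider "Re z > 0" "Im z \<ge> 0" | "Re z < 0" "Im z \<le> 0" | "Im z < 0" "Re z \<ge> 0" | "Im z > 0" "Re z \<le> 0"
    by linarith
  then show "\<exists>u. ounit d u \<and> u * z \<in> Aset d"
  proof cases
    case 1 then show ?thesis using in_Aset[OF units(1)] units(1) by auto
  next
    case 2 then show ?thesis using in_Aset[OF units(2)] units(2) by auto
  next
    case 3 then show ?thesis using in_Aset[OF units(3)] units(3) by auto
  next
    case 4 then show ?thesis using in_Aset[OF units(4)] units(4) by auto
  qed
next
  fix x u assume x: "x \<in> Aset d" and u: "ounit d u" and ux: "u * x \<in> Aset d"
  have "Re x > 0" "Im x \<ge> 0" "Re (u * x) > 0" "Im (u * x) \<ge> 0"
    using Aset_minus_1_iff[OF assms, of x] Aset_minus_1_iff[OF assms, of "u * x"] x ux by simp_all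
  moreover have "u = 1 \<or> u = -1 \<or> u = \<i> \<or> u = -\<i>" using ounit_cases_minus_1[OF assms u] .
  ultimately show "u = 1" by auto
qed

lemma omega_minus_3: "d = -3 \<Longrightarrow> \<omega> = Complex (1 / 2) (sqrt 3 / 2)"
  using omega_imaginary[OF d_neg] by (simp add: complex_eq_iff)

lemma ounit_cases_minus_3:
  assumes "d = -3" "ounit d u"
  shows "u = 1 \<or> u = -1 \<or> u = \<omega> \<or> u = -\<omega> \<or> u = \<omega> - 1 \<or> u = 1 - \<omega>"
proof -
  obtain a b where ab: "u = of_int a + of_int b * \<omega>" "a\<^sup>2 + t\<^sub>\<omega> * a * b + n\<^sub>\<omega> * b\<^sup>2 = 1"
    using ounit_coords[OF assms(2)] by blast
  have "t\<^sub>\<omega> = 1" "n\<^sub>\<omega> = 1" using assms(1) by (simp_all add: trace_omega_def norm_omega_def)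
  then have e: "(2 * a + b)\<^sup>2 + 3 * b\<^sup>2 = 4" using quadratic_form_times_4[of a b] ab(2) by simp
  then have "b\<^sup>2 \<le> 1" "(2 * a + b)\<^sup>2 \<le> 4"
    using zero_le_power2[of b] zero_le_power2[of "2 * a + b"] by linarith+
  then have "\<bar>b\<bar> \<le> 1" "\<bar>2 * a + b\<bar> \<le> 2"
    using abs_square_le_1[of b] abs_le_square_iff[of "2 * a + b" 2] by simp_all
  then have "a \<in> {-1, 0, 1} \<and> b \<in> {-1, 0, 1}" by auto
  then show ?thesis using e ab(1) by (auto simp: algebra_simps)
qed

text \<open>In the coordinates \<open>(\<surd>3 Re z, Im z)\<close>, the sector \<open>A(-3)\<close> is \<open>0 \<le> y < X\<close> and
  multiplication by \<open>\<omega>\<close> acts linearly.\<close>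
lemma mult_omega_minus_3:
  assumes "d = -3"
  shows "sqrt 3 * Re (\<omega> * z) = (sqrt 3 * Re z) / 2 - 3 * Im z / 2"
    "Im (\<omega> * z) = (sqrt 3 * Re z) / 2 + Im z / 2"
  using omega_minus_3[OF assms] by (simp_all add: algebra_simps)

lemma sector_minus_3_rotation:
  assumes "d = -3" "Im z > 0 \<or> (Im z = 0 \<and> Re z > 0)"
  shows "\<exists>u\<in>{1, 1 - \<omega>, -\<omega>}. Im (u * z) \<ge> 0 \<and> Im (u * z) < sqrt 3 * Re (u * z)"
proof -
  define X where "X = sqrt 3 * Re z"
  define y where "y = Im z"
  have rot: "sqrt 3 * Re (1 * z) = X" "Im (1 * z) = y"
    "sqrt 3 * Re ((1 - \<omega>) * z) = X / 2 + 3 * y / 2" "Im ((1 - \<omega>) * z) = y / 2 - X / 2"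
    "sqrt 3 * Re ((- \<omega>) * z) = 3 * y / 2 - X / 2" "Im ((- \<omega>) * z) = - X / 2 - y / 2"
    using mult_omega_minus_3[OF assms(1), of z] unfolding X_def y_def
    by (simp_all add: left_diff_distrib right_diff_distrib)
  have pos: "y > 0 \<or> (y = 0 \<and> X > 0)" using assms(2) unfolding X_def y_def by auto
  consider "y < X" | "X \<le> y" "- X < y" | "X \<le> y" "y \<le> - X" by linarith
  then show ?thesis
  proof cases
    case 1
    then have "Im (1 * z) \<ge> 0 \<and> Im (1 * z) < sqrt 3 * Re (1 * z)" using pos rot(1,2) by auto
    then show ?thesis by blast
  next
    case 2
    then have "Im ((1 - \<omega>) * z) \<ge> 0 \<and> Im ((1 - \<omega>) * z) < sqrt 3 * Re ((1 - \<omega>) * z)"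
      unfolding rot(3,4) by simp
    then show ?thesis by blast
  next
    case 3
    then have "Im ((- \<omega>) * z) \<ge> 0 \<and> Im ((- \<omega>) * z) < sqrt 3 * Re ((- \<omega>) * z)"
      using pos unfolding rot(5,6) by auto
    then show ?thesis by blast
  qed
qed

lemma Aset_minus_3_assoc_exists:
  assumes d3: "d = -3" and z: "z \<in> \<O>" "z \<noteq> 0"
  shows "\<exists>u. ounit d u \<and> u * z \<in> Aset d"
proof -
  have "t\<^sub>\<omega> = 1" "n\<^sub>\<omega> = 1" using d3 by (simp_all add: trace_omega_def norm_omega_def)
  then have "ounit d 1" "ounit d (-1)" "ounit d \<omega>" "ounit d (-\<omega>)" "ounit d (\<omega> - 1)" "ounit d (1 - \<omega>)"
    using ounit_of_coords[of 1 0] ounit_of_coords[of "-1" 0] ounit_of_coords[of 0 1]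
      ounit_of_coords[of 0 "-1"] ounit_of_coords[of "-1" 1] ounit_of_coords[of 1 "-1"]
    by (simp_all add: algebra_simps)
  then have units: "ounit d u" if "u \<in> {1, -1, \<omega>, -\<omega>, \<omega> - 1, 1 - \<omega>}" for u
    using that by auto
  consider "Im z > 0 \<or> (Im z = 0 \<and> Re z > 0)" | "Im (-z) > 0 \<or> (Im (-z) = 0 \<and> Re (-z) > 0)"
    using upper_half_or_uminus[OF z(2)] by blast
  then obtain u where "u \<in> {1, -1, \<omega>, -\<omega>, \<omega> - 1, 1 - \<omega>}" "Im (u * z) \<ge> 0" "Im (u * z) < sqrt 3 * Re (u * z)"
  proof cases
    case 1
    then show ?thesis using sector_minus_3_rotation[OF d3] that by blast
  next
    case 2
    then obtain u where "u \<in> {1, 1 - \<omega>, -\<omega>}" "Im (u * - z) \<ge> 0" "Im (u * - z) < sqrt 3 * Re (u * - z)"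
      using sector_minus_3_rotation[OF d3] by blast
    then show ?thesis using that[of "- u"] by auto
  qed
  then have "ounit d u" using units by blast
  then have "u * z \<in> \<O>" "u * z \<noteq> 0" using z unfolding ounit_iff_inorm by auto
  then have "u * z \<in> Aset d" using Aset_minus_3_iff[OF d3, of "u * z"] \<open>Im (u * z) \<ge> 0\<close>
      \<open>Im (u * z) < sqrt 3 * Re (u * z)\<close> by simp
  then show ?thesis using \<open>ounit d u\<close> by blast
qed

lemma Aset_minus_3_assoc_unique:
  assumes d3: "d = -3" and x: "x \<in> Aset d" and u: "ounit d u" and ux: "u * x \<in> Aset d"
  shows "u = 1"
proof -
  define X where "X = sqrt 3 * Re x"
  define y where "y = Im x"
  have sector: "0 \<le> y" "y < X" "Im (u * x) \<ge> 0" "Im (u * x) < sqrt 3 * Re (u * x)"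
    using x ux Aset_minus_3_iff[OF d3] unfolding X_def y_def by auto
  have rot: "sqrt 3 * Re ((-1) * x) = - X" "Im ((-1) * x) = - y"
    "sqrt 3 * Re (\<omega> * x) = X / 2 - 3 * y / 2" "Im (\<omega> * x) = X / 2 + y / 2"
    "sqrt 3 * Re ((-\<omega>) * x) = 3 * y / 2 - X / 2" "Im ((-\<omega>) * x) = - X / 2 - y / 2"
    "sqrt 3 * Re ((\<omega> - 1) * x) = - X / 2 - 3 * y / 2" "Im ((\<omega> - 1) * x) = X / 2 - y / 2"
    "sqrt 3 * Re ((1 - \<omega>) * x) = X / 2 + 3 * y / 2" "Im ((1 - \<omega>) * x) = y / 2 - X / 2"
    using mult_omega_minus_3[OF d3, of x] unfolding X_def y_def
    by (simp_all add: left_diff_distrib right_diff_distrib)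
  from ounit_cases_minus_3[OF d3 u] show ?thesis
  proof (elim disjE)
    assume "u = -1" then show ?thesis using sector rot(1,2) by simp
  next
    assume "u = \<omega>" then show ?thesis using sector rot(3,4) by simp
  next
    assume "u = -\<omega>" then show ?thesis using sector rot(5,6) by simp
  next
    assume "u = \<omega> - 1" then show ?thesis using sector rot(7,8) by simp
  next
    assume "u = 1 - \<omega>" then show ?thesis using sector rot(9,10) by simp
  qed simp
qed

lemma Aset_fundamental_minus_3: "d = -3 \<Longrightarrow> Aset_fundamental d"
  by unfold_locales (use Aset_minus_3_assoc_exists Aset_minus_3_assoc_unique in blast)+

section \<open>The nine fields\<close>

lemma quadratic_form_mod:
  fixes A B q :: int
  shows "(A\<^sup>2 + t\<^sub>\<omega> * A * B + n\<^sub>\<omega> * B\<^sup>2) mod q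
    = ((A mod q)\<^sup>2 + t\<^sub>\<omega> * (A mod q) * (B mod q) + n\<^sub>\<omega> * (B mod q)\<^sup>2) mod q"
proof -
  have "q dvd A - A mod q" "q dvd B - B mod q" by (simp_all add: mod_eq_dvd_iff)
  then have "q dvd (A - A mod q) * (A + A mod q) + t\<^sub>\<omega> * ((A - A mod q) * B + A mod q * (B - B mod q))
      + n\<^sub>\<omega> * ((B - B mod q) * (B + B mod q))"
    by (intro dvd_add dvd_mult dvd_mult2) auto
  then show ?thesis by (simp add: mod_eq_dvd_iff algebra_simps power2_eq_square)
qed

lemma inert_if_no_root:
  assumes q: "prime q" and no_root: "\<forall>k\<in>{..<nat q}. \<not> q dvd (int k)\<^sup>2 + t\<^sub>\<omega> * int k + n\<^sub>\<omega>"
  shows "inert q"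
  unfolding inert_def
proof (intro ballI impI)
  fix x assume x: "x \<in> \<O>" and qx: "q dvd inorm x"
  obtain a b where ab: "x = of_int a + of_int b * \<omega>" using x unfolding Od_iff by blast
  have N: "q dvd a\<^sup>2 + t\<^sub>\<omega> * a * b + n\<^sub>\<omega> * b\<^sup>2" using qx ab inorm_coords by simp
  show "of_int q \<preceq> x"
  proof (cases "q dvd b")
    case True
    then show ?thesis using prime_dvd_coords[OF q N] ab by simp
  next
    case False
    text \<open>Otherwise \<open>a b\<^sup>-\<^sup>1\<close> would be a root of \<open>X\<^sup>2 + t X + n\<close> modulo \<open>q\<close>.\<close>
    obtain u v where uv: "u * b + v * q = 1" using bezout_prime_int[OF q False] by blast
    have q1: "q > 1" using q prime_gt_1_int by auto
    define k where "k = (a * u) mod q"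
    have "b * u = 1 + (- v) * q" using uv by (simp add: algebra_simps)
    then have "(b * u) mod q = 1 mod q" by (simp only: mod_mult_self1)
    then have "(b * u) mod q = 1" using q1 by simp
    have "q dvd u\<^sup>2 * (a\<^sup>2 + t\<^sub>\<omega> * a * b + n\<^sub>\<omega> * b\<^sup>2)" using N by simp
    moreover have "u\<^sup>2 * (a\<^sup>2 + t\<^sub>\<omega> * a * b + n\<^sub>\<omega> * b\<^sup>2) = (a*u)\<^sup>2 + t\<^sub>\<omega> * (a*u) * (b*u) + n\<^sub>\<omega> * (b*u)\<^sup>2"
      by (simp add: algebra_simps power2_eq_square)
    ultimately have "(k\<^sup>2 + t\<^sub>\<omega> * k * 1 + n\<^sub>\<omega> * 1\<^sup>2) mod q = 0"
      using quadratic_form_mod[of "a * u" "b * u" q] \<open>(b * u) mod q = 1\<close> unfolding k_def by simp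
    moreover have "0 \<le> k" "k < q" unfolding k_def using q1 by auto
    ultimately show ?thesis using no_root[rule_format, of "nat k"] by auto
  qed
qed

lemma inert_or_inorm_if:
  assumes "prime q"
    "q = n\<^sub>\<omega> \<or> q = 1 + t\<^sub>\<omega> + n\<^sub>\<omega> \<or> (\<forall>k\<in>{..<nat q}. \<not> q dvd (int k)\<^sup>2 + t\<^sub>\<omega> * int k + n\<^sub>\<omega>)"
  shows "inert q \<or> (\<exists>r\<in>\<O>. inorm r = q)"
  using assms(2)
proof (elim disjE)
  assume "q = n\<^sub>\<omega>"
  then have "inorm \<omega> = q" using inorm_coords[of 0 1] by simp
  then show ?thesis using Od_omega by blast
next
  assume "q = 1 + t\<^sub>\<omega> + n\<^sub>\<omega>"
  then have "inorm (1 + \<omega>) = q" using inorm_coords[of 1 1] by simp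
  then show ?thesis using Od_add[OF Od_1 Od_omega] by blast
qed (use inert_if_no_root[OF assms(1)] in blast)

end

text \<open>The primes up to the bound \<open>K\<close> of Thue's lemma are checked by computation: each is
  the norm of \<open>\<omega>\<close> or of \<open>1 + \<omega>\<close>, or \<open>X\<^sup>2 + t X + n\<close> has no root modulo it.\<close>
lemma class_number_one_if:
  assumes "d < 0" "4 * norm_omega d < (K + 1 - trace_omega d)\<^sup>2" "trace_omega d \<le> K"
    and "\<forall>q\<in>{..<Suc (nat K)}. prime q \<longrightarrow> int q = norm_omega d \<or> int q = 1 + trace_omega d + norm_omega d
      \<or> (\<forall>k\<in>{..<q}. \<not> int q dvd (int k)\<^sup>2 + trace_omega d * int k + norm_omega d)"
  shows "class_number_one d K"
proof -
  interpret imag_quadratic d using assms(1) by unfold_locales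
  show ?thesis
  proof (unfold_locales)
    fix q :: int assume q: "prime q" "q \<le> K"
    have "q > 0" using prime_gt_0_int[OF q(1)] .
    then have "nat q \<in> {..<Suc (nat K)}" "prime (nat q)" using q by auto
    then have "int (nat q) = n\<^sub>\<omega> \<or> int (nat q) = 1 + t\<^sub>\<omega> + n\<^sub>\<omega>
      \<or> (\<forall>k\<in>{..<nat q}. \<not> int (nat q) dvd (int k)\<^sup>2 + t\<^sub>\<omega> * int k + n\<^sub>\<omega>)"
      using assms(4) by blast
    then show "inert q \<or> (\<exists>r\<in>\<O>. inorm r = q)"
      using inert_or_inorm_if[OF q(1)] \<open>q > 0\<close> by simp
  qed (use assms in auto)
qed

lemma class_number_one_listed:
  assumes "d \<in> {-163, -67, -43, -19, -11, -7, -3, -2, -1}"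
  shows "\<exists>K. class_number_one d K"
proof -
  have K: "class_number_one d K" if "4 * norm_omega d < (K + 1 - trace_omega d)\<^sup>2" "trace_omega d \<le> K"
    "\<forall>q\<in>{..<Suc (nat K)}. prime q \<longrightarrow> int q = norm_omega d \<or> int q = 1 + trace_omega d + norm_omega d
      \<or> (\<forall>k\<in>{..<q}. \<not> int q dvd (int k)\<^sup>2 + trace_omega d * int k + norm_omega d)" for K
    using class_number_one_if[OF _ that] assms by auto
  note simps = trace_omega_def norm_omega_def lessThan_nat_numeral
  from assms consider "d = -163" | "d = -67" | "d = -43" | "d = -19" | "d = -11" | "d = -7"
    | "d = -3" | "d = -2" | "d = -1" by auto
  then show ?thesis
  proof cases
    case 1 show ?thesis by (rule exI[of _ 13], rule K) (simp_all add: simps 1)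
  next
    case 2 show ?thesis by (rule exI[of _ 9], rule K) (simp_all add: simps 2)
  next
    case 3 show ?thesis by (rule exI[of _ 7], rule K) (simp_all add: simps 3)
  next
    case 4 show ?thesis by (rule exI[of _ 5], rule K) (simp_all add: simps 4)
  next
    case 5 show ?thesis by (rule exI[of _ 4], rule K) (simp_all add: simps 5)
  next
    case 6 show ?thesis by (rule exI[of _ 3], rule K) (simp_all add: simps 6)
  next
    case 7 show ?thesis by (rule exI[of _ 3], rule K) (simp_all add: simps 7)
  next
    case 8 show ?thesis by (rule exI[of _ 2], rule K) (simp_all add: simps 8)
  next
    case 9 show ?thesis by (rule exI[of _ 2], rule K) (simp_all add: simps 9)
  qed
qed

lemma Aset_fundamental_listed:
  assumes "d \<in> {-163, -67, -43, -19, -11, -7, -3, -2, -1}"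
  shows "Aset_fundamental d"
proof -
  interpret imag_quadratic d using assms by unfold_locales auto
  consider "d = -1" | "d = -3" | "norm_omega d \<ge> 2" "d \<noteq> -1" "d \<noteq> -3"
    using assms by (auto simp: norm_omega_def)
  then show ?thesis
  proof cases
    case 1 then show ?thesis by (rule Aset_fundamental_minus_1)
  next
    case 2 then show ?thesis by (rule Aset_fundamental_minus_3)
  next
    case 3 then show ?thesis by (rule Aset_fundamental_if_norm_omega_ge_2)
  qed
qed

theorem theorem2p6:
  fixes b :: rat and d :: int
  assumes "b > 1"
    and "d \<in> {-163, -67, -43, -19, -11, -7, -3, -2, -1}"
  shows "\<exists>g. (\<forall>n\<in>U_set b. g n \<in> V_set d b) \<and> inj_on g (U_set b)"
proof -
  obtain K where "class_number_one d K" using class_number_one_listed[OF assms(2)] by blast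
  then interpret unitary_lift d K
    using Aset_fundamental_listed[OF assms(2)] by (simp add: unitary_lift_def)
  show ?thesis by (rule exists_inj_U_set_V_set)
qed

end
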